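(* Let $A\in\mathbb{C}^{2^n\times 2^n}$, $L=(A+A^\dagger)/2$, $H=(A-A^\dagger)/(2i)$, and let $k_1,\dots,k_M\in\mathbb{R}$ with $k_{\max}=\max_j|k_j|$. Assume access to $U_A$, an $(\alpha_A,m_A,\epsilon_A)$-block encoding of $A$, and to $\epsilon_R$-accurate multi-controlled $R_Z(\phi)$ gates. Then there exists a $(\sqrt{1+k_{\max}^2}\,\alpha_A,\ m_A+2,\ \epsilon)$-block encoding of $$\mathcal{S}=\sum_{j=1}^M|j\rangle\langle j|\otimes(k_jL+H),$$ as long as $\epsilon_A\sqrt{1+k_{\max}^2}+2M\sqrt{1+k_{\max}^2}\,\epsilon_R\,\alpha_A\le\epsilon$. The construction uses one call to $U_A$, one call to $U_A^\dagger$, and $2M$ multi-controlled $R_Z(\phi)$ gates.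
   Context: A unitary $U$ acting on $m$ ancilla qubits plus the system is an $(\alpha,m,\epsilon)$-block encoding of an operator $B$ if $\|\alpha(\langle0|^{\otimes m}\otimes I)U(|0\rangle^{\otimes m}\otimes I)-B\|\le\epsilon$, where $\|\cdot\|$ is the spectral norm. The states $|j\rangle$, $j=1,\dots,M$, form an orthonormal basis of the index register (so $\sum_j|j\rangle\langle j|=I$). An $\epsilon_R$-accurate gate is an implementation within operator-norm distance $\epsilon_R$ of the ideal gate; $R_Z(\phi)=e^{-i\phi Z/2}$. *)

theory Defs
  imports Complex_Main "Jordan_Normal_Form.Matrix"
begin

definition dag :: "complex mat \<Rightarrow> complex mat" where
  "dag A = mat (dim_col A) (dim_row A) (\<lambda>(i, j). cnj (A $$ (j, i)))"

definition is_unitary :: "complex mat \<Rightarrow> bool" where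
  "is_unitary U \<longleftrightarrow> U \<in> carrier_mat (dim_row U) (dim_row U) \<and> dag U * U = 1\<^sub>m (dim_row U)"

definition vnorm :: "complex vec \<Rightarrow> real" where
  "vnorm v = sqrt (\<Sum>i<dim_vec v. (cmod (v $ i))\<^sup>2)"

definition opnorm :: "complex mat \<Rightarrow> real" where
  "opnorm B = Sup {vnorm (B *\<^sub>v v) | v. v \<in> carrier_vec (dim_col B) \<and> vnorm v \<le> 1}"

text \<open>Upper-left d x d block, i.e. (<0|^{m} (x) I) U (|0>^{m} (x) I) when the
  ancilla register is the most significant tensor factor.\<close>
definition top_block :: "nat \<Rightarrow> complex mat \<Rightarrow> complex mat" where
  "top_block d U = mat d d (\<lambda>(i, j). U $$ (i, j))"

text \<open>U (on m ancilla qubits plus a d-dimensional system, ancillas first) is an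
  (alpha, m, eps)-block encoding of the d x d matrix B.\<close>
definition block_encoding ::
  "real \<Rightarrow> nat \<Rightarrow> real \<Rightarrow> complex mat \<Rightarrow> complex mat \<Rightarrow> bool" where
  "block_encoding \<alpha> m \<epsilon> U B \<longleftrightarrow>
     (let d = dim_row B in
       B \<in> carrier_mat d d \<and> U \<in> carrier_mat (2^m * d) (2^m * d) \<and> is_unitary U \<and>
       opnorm (complex_of_real \<alpha> \<cdot>\<^sub>m top_block d U - B) \<le> \<epsilon>)"

definition herm_part :: "complex mat \<Rightarrow> complex mat" where
  "herm_part A = (1/2 :: complex) \<cdot>\<^sub>m (A + dag A)"

definition antiherm_part :: "complex mat \<Rightarrow> complex mat" where
  "antiherm_part A = (1/(2*\<i>)) \<cdot>\<^sub>m (A - dag A)"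

text \<open>S = sum_j |j><j| (x) (k_j L + H); index register (dimension M, basis
  states j = 0..M-1 standing for the paper's 1..M) is the more significant factor.\<close>
definition S_op :: "nat \<Rightarrow> nat \<Rightarrow> (nat \<Rightarrow> real) \<Rightarrow> complex mat \<Rightarrow> complex mat" where
  "S_op n M k A = mat (M * 2^n) (M * 2^n) (\<lambda>(r, c).
      if r div 2^n = c div 2^n then
        (complex_of_real (k (r div 2^n)) \<cdot>\<^sub>m herm_part A + antiherm_part A) $$ (r mod 2^n, c mod 2^n)
      else 0)"

text \<open>Full register, most significant first: two new ancilla qubits (value a < 4,
  qubit t of it is bit t of a), the m_A ancilla qubits of U_A (value b), the
  index register (value j < M), the system (value s < 2^n).
  Basis index r = ((a * 2^mA + b) * M + j) * 2^n + s.\<close>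

definition full_dim :: "nat \<Rightarrow> nat \<Rightarrow> nat \<Rightarrow> nat" where
  "full_dim n M mA = 4 * 2^mA * M * 2^n"

definition idx_s :: "nat \<Rightarrow> nat \<Rightarrow> nat \<Rightarrow> nat \<Rightarrow> nat" where
  "idx_s n M mA r = r mod 2^n"
definition idx_j :: "nat \<Rightarrow> nat \<Rightarrow> nat \<Rightarrow> nat \<Rightarrow> nat" where
  "idx_j n M mA r = (r div 2^n) mod M"
definition idx_b :: "nat \<Rightarrow> nat \<Rightarrow> nat \<Rightarrow> nat \<Rightarrow> nat" where
  "idx_b n M mA r = (r div (2^n * M)) mod 2^mA"
definition idx_a :: "nat \<Rightarrow> nat \<Rightarrow> nat \<Rightarrow> nat \<Rightarrow> nat" where
  "idx_a n M mA r = r div (2^n * M * 2^mA)"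

definition abit :: "nat \<Rightarrow> nat \<Rightarrow> bool" where
  "abit t a = odd (a div 2^t)"

text \<open>Control specification: optional required values of new ancilla qubit 0,
  new ancilla qubit 1, and of the index register.\<close>
datatype ctrl = Ctrl "bool option" "bool option" "nat option"

fun ctrl_sat :: "ctrl \<Rightarrow> nat \<Rightarrow> nat \<Rightarrow> bool" where
  "ctrl_sat (Ctrl c0 c1 cj) a j \<longleftrightarrow>
     (\<forall>x. c0 = Some x \<longrightarrow> abit 0 a = x) \<and> (\<forall>x. c1 = Some x \<longrightarrow> abit 1 a = x) \<and>
     (\<forall>x. cj = Some x \<longrightarrow> j = x)"

datatype gate =
    G_Had nat          \<comment> \<open>exact Hadamard on new ancilla qubit t\<close>
  | G_X nat
  | G_UA ctrl          \<comment> \<open>(controlled) call to U_A on (U_A ancillas, system)\<close>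
  | G_UAdag ctrl
  | G_RZ ctrl nat real \<comment> \<open>implemented multi-controlled R_Z(phi) on new ancilla qubit t\<close>

text \<open>Single-qubit gate W (2x2) on new ancilla qubit t, identity elsewhere.\<close>
definition on_anc :: "nat \<Rightarrow> nat \<Rightarrow> nat \<Rightarrow> nat \<Rightarrow> complex mat \<Rightarrow> complex mat" where
  "on_anc n M mA t W = mat (full_dim n M mA) (full_dim n M mA) (\<lambda>(r, c).
     let ar = idx_a n M mA r; ac = idx_a n M mA c in
     if r mod (2^n * M * 2^mA) = c mod (2^n * M * 2^mA) \<and>
        (\<forall>t'<2. t' \<noteq> t \<longrightarrow> abit t' ar = abit t' ac)
     then W $$ (if abit t ar then 1 else 0, if abit t ac then 1 else 0) else 0)"

definition hadamard :: "complex mat" where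
  "hadamard = mat 2 2 (\<lambda>(i, j). if i = 1 \<and> j = 1 then - 1 / sqrt 2 else 1 / sqrt 2)"

definition pauliX :: "complex mat" where
  "pauliX = mat 2 2 (\<lambda>(i, j). if i \<noteq> j then 1 else 0)"

definition rz :: "real \<Rightarrow> complex mat" where
  "rz \<phi> = mat 2 2 (\<lambda>(i, j). if i = j then (if i = 0 then cis (- \<phi> / 2) else cis (\<phi> / 2)) else 0)"

definition rz_ideal :: "nat \<Rightarrow> nat \<Rightarrow> nat \<Rightarrow> ctrl \<Rightarrow> nat \<Rightarrow> real \<Rightarrow> complex mat" where
  "rz_ideal n M mA c t \<phi> = mat (full_dim n M mA) (full_dim n M mA) (\<lambda>(r, s).
     if ctrl_sat c (idx_a n M mA r) (idx_j n M mA r) then on_anc n M mA t (rz \<phi>) $$ (r, s)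
     else if r = s then 1 else 0)"

text \<open>(Controlled) application of V (on U_A ancillas (x) system, dimension
  2^mA * 2^n, index b * 2^n + s) to the full register.\<close>
definition ctrl_call :: "nat \<Rightarrow> nat \<Rightarrow> nat \<Rightarrow> ctrl \<Rightarrow> complex mat \<Rightarrow> complex mat" where
  "ctrl_call n M mA c V = mat (full_dim n M mA) (full_dim n M mA) (\<lambda>(r, s).
     if idx_a n M mA r = idx_a n M mA s \<and> idx_j n M mA r = idx_j n M mA s then
       (if ctrl_sat c (idx_a n M mA r) (idx_j n M mA r)
        then V $$ (idx_b n M mA r * 2^n + idx_s n M mA r, idx_b n M mA s * 2^n + idx_s n M mA s)
        else if r = s then 1 else 0)
     else 0)"

fun gate_mat :: "nat \<Rightarrow> nat \<Rightarrow> nat \<Rightarrow> complex mat \<Rightarrow>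
    (ctrl \<Rightarrow> nat \<Rightarrow> real \<Rightarrow> complex mat) \<Rightarrow> gate \<Rightarrow> complex mat" where
  "gate_mat n M mA UA R (G_Had t) = on_anc n M mA t hadamard"
| "gate_mat n M mA UA R (G_X t) = on_anc n M mA t pauliX"
| "gate_mat n M mA UA R (G_UA c) = ctrl_call n M mA c UA"
| "gate_mat n M mA UA R (G_UAdag c) = ctrl_call n M mA c (dag UA)"
| "gate_mat n M mA UA R (G_RZ c t \<phi>) = R c t \<phi>"

text \<open>Circuit: gates applied left to right (first list element acts first).\<close>
definition circuit_mat :: "nat \<Rightarrow> nat \<Rightarrow> nat \<Rightarrow> complex mat \<Rightarrow>
    (ctrl \<Rightarrow> nat \<Rightarrow> real \<Rightarrow> complex mat) \<Rightarrow> gate list \<Rightarrow> complex mat" where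
  "circuit_mat n M mA UA R gs =
     foldl (\<lambda>acc g. gate_mat n M mA UA R g * acc) (1\<^sub>m (full_dim n M mA)) gs"

fun valid_gate :: "gate \<Rightarrow> bool" where
  "valid_gate (G_Had t) \<longleftrightarrow> t < 2"
| "valid_gate (G_X t) \<longleftrightarrow> t < 2"
| "valid_gate (G_RZ c t \<phi>) \<longleftrightarrow> t < 2"
| "valid_gate _ \<longleftrightarrow> True"

fun is_UA_call :: "gate \<Rightarrow> bool" where
  "is_UA_call (G_UA _) = True" | "is_UA_call _ = False"
fun is_UAdag_call :: "gate \<Rightarrow> bool" where
  "is_UAdag_call (G_UAdag _) = True" | "is_UAdag_call _ = False"
fun is_RZ :: "gate \<Rightarrow> bool" where
  "is_RZ (G_RZ _ _ _) = True" | "is_RZ _ = False"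

end

theory Submission
  imports Defs "HOL-Analysis.L2_Norm" "Jordan_Normal_Form.Determinant"
begin

text \<open>Write \<open>z\<^sub>j = k\<^sub>j + \<i>\<close>. Then \<open>k\<^sub>j L + H = (cnj z\<^sub>j A + z\<^sub>j A\<^sup>\<dagger>) / 2\<close>, a linear combination of
  \<open>A\<close> and \<open>A\<^sup>\<dagger>\<close> with coefficients of modulus \<open>|z\<^sub>j| / 2 \<le> sqrt (1 + k\<^sub>m\<^sub>a\<^sub>x\<^sup>2) / 2\<close>. The circuit
  prepares the two new ancillas in the uniform superposition (two Hadamards), applies \<open>U\<^sub>A\<close>
  controlled on ancilla 0 being off and \<open>U\<^sub>A\<^sup>\<dagger>\<close> controlled on it being on, then, for each
  index \<open>j\<close>, an \<open>R\<^sub>Z\<close> rotation on ancilla 0 by \<open>2 Arg z\<^sub>j\<close> (the phase of the coefficients) and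
  one on ancilla 1 by \<open>2 arccos (|z\<^sub>j| / sqrt (1 + k\<^sub>m\<^sub>a\<^sub>x\<^sup>2))\<close> (their modulus), and finally
  unprepares the ancillas. Its top-left block is block diagonal in \<open>j\<close> with blocks
  \<open>(cnj z\<^sub>j U\<^sub>A + z\<^sub>j U\<^sub>A\<^sup>\<dagger>) / (2 sqrt (1 + k\<^sub>m\<^sub>a\<^sub>x\<^sup>2))\<close>, so the block-encoding error of \<open>U\<^sub>A\<close> is
  amplified at most by \<open>sqrt (1 + k\<^sub>m\<^sub>a\<^sub>x\<^sup>2)\<close>; replacing the \<open>2M\<close> ideal rotations by the
  implemented ones costs at most \<open>\<epsilon>\<^sub>R\<close> each in operator norm, since all gates are unitary.\<close>

section \<open>Vector and operator norms\<close>

lemma vnorm_eq_L2_set: "vnorm v = L2_set (\<lambda>i. cmod (v $ i)) {..<dim_vec v}"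
  by (simp add: vnorm_def L2_set_def)

lemma vnorm_nonneg [simp]: "0 \<le> vnorm v"
  by (simp add: vnorm_def sum_nonneg)

lemma power2_vnorm: "(vnorm v)\<^sup>2 = (\<Sum>i<dim_vec v. (cmod (v $ i))\<^sup>2)"
  by (simp add: vnorm_def sum_nonneg)

lemma vnorm_add_le:
  assumes "dim_vec u = dim_vec w"
  shows "vnorm (u + w) \<le> vnorm u + vnorm w"
proof -
  have "vnorm (u + w) = L2_set (\<lambda>i. cmod ((u + w) $ i)) {..<dim_vec w}"
    by (simp add: vnorm_eq_L2_set)
  also have "\<dots> \<le> L2_set (\<lambda>i. cmod (u $ i) + cmod (w $ i)) {..<dim_vec w}"
    by (rule L2_set_mono) (auto simp: norm_triangle_ineq)
  also have "\<dots> \<le> L2_set (\<lambda>i. cmod (u $ i)) {..<dim_vec w} + L2_set (\<lambda>i. cmod (w $ i)) {..<dim_vec w}"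
    by (rule L2_set_triangle_ineq)
  finally show ?thesis
    using assms by (simp add: vnorm_eq_L2_set)
qed

lemma vnorm_smult: "vnorm (a \<cdot>\<^sub>v v) = cmod a * vnorm v"
proof -
  have "(\<Sum>i<dim_vec v. (cmod (a * v $ i))\<^sup>2) = (cmod a)\<^sup>2 * (\<Sum>i<dim_vec v. (cmod (v $ i))\<^sup>2)"
    by (simp add: norm_mult power_mult_distrib sum_distrib_left)
  then show ?thesis
    by (simp add: vnorm_def real_sqrt_mult)
qed

lemma vnorm_eq_0_index: "vnorm v = 0 \<Longrightarrow> i < dim_vec v \<Longrightarrow> v $ i = 0"
  unfolding vnorm_eq_L2_set by (subst (asm) L2_set_eq_0_iff) auto

lemma norm_index_le_vnorm: "i < dim_vec v \<Longrightarrow> cmod (v $ i) \<le> vnorm v"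
  unfolding vnorm_eq_L2_set by (rule member_le_L2_set) auto

lemma index_mult_mat_sum:
  "A \<in> carrier_mat nr m \<Longrightarrow> B \<in> carrier_mat m nc \<Longrightarrow> r < nr \<Longrightarrow> c < nc \<Longrightarrow>
    (A * B) $$ (r, c) = (\<Sum>i<m. A $$ (r, i) * B $$ (i, c))"
  by (simp add: scalar_prod_def row_def col_def atLeast0LessThan)

lemma bdd_above_opnorm_set:
  "bdd_above {vnorm (B *\<^sub>v v) | v. v \<in> carrier_vec (dim_col B) \<and> vnorm v \<le> 1}"
proof (rule bdd_aboveI[where M = "\<Sum>i<dim_row B. \<Sum>j<dim_col B. cmod (B $$ (i, j))"])
  fix x assume "x \<in> {vnorm (B *\<^sub>v v) | v. v \<in> carrier_vec (dim_col B) \<and> vnorm v \<le> 1}"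
  then obtain v where v: "v \<in> carrier_vec (dim_col B)" "vnorm v \<le> 1" and x: "x = vnorm (B *\<^sub>v v)"
    by auto
  have entry: "cmod ((B *\<^sub>v v) $ i) \<le> (\<Sum>j<dim_col B. cmod (B $$ (i, j)))" if i: "i < dim_row B" for i
  proof -
    have "cmod ((B *\<^sub>v v) $ i) \<le> (\<Sum>j<dim_col B. cmod (B $$ (i, j) * v $ j))"
      using i v by (simp add: scalar_prod_def atLeast0LessThan norm_sum)
    also have "\<dots> \<le> (\<Sum>j<dim_col B. cmod (B $$ (i, j)))"
      using v order_trans[OF norm_index_le_vnorm[of _ v] v(2)]
      by (intro sum_mono) (auto simp: norm_mult intro!: mult_left_le)
    finally show ?thesis .
  qed
  have "x = L2_set (\<lambda>i. cmod ((B *\<^sub>v v) $ i)) {..<dim_row B}"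
    using x by (simp add: vnorm_eq_L2_set)
  also have "\<dots> \<le> (\<Sum>i<dim_row B. cmod ((B *\<^sub>v v) $ i))"
    by (rule L2_set_le_sum) auto
  also have "\<dots> \<le> (\<Sum>i<dim_row B. \<Sum>j<dim_col B. cmod (B $$ (i, j)))"
    using entry by (intro sum_mono) auto
  finally show "x \<le> (\<Sum>i<dim_row B. \<Sum>j<dim_col B. cmod (B $$ (i, j)))" .
qed

lemma vnorm_mult_le_opnorm:
  "v \<in> carrier_vec (dim_col B) \<Longrightarrow> vnorm v \<le> 1 \<Longrightarrow> vnorm (B *\<^sub>v v) \<le> opnorm B"
  unfolding opnorm_def by (rule cSup_upper[OF _ bdd_above_opnorm_set]) auto

lemma opnorm_nonneg: "0 \<le> opnorm B"
  using vnorm_mult_le_opnorm[of "0\<^sub>v (dim_col B)" B] by (simp add: vnorm_def)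

lemma vnorm_mult_mat_vec_le:
  assumes v: "v \<in> carrier_vec (dim_col B)"
  shows "vnorm (B *\<^sub>v v) \<le> opnorm B * vnorm v"
proof (cases "vnorm v = 0")
  case True
  then have "vnorm (B *\<^sub>v v) = 0"
    using v vnorm_eq_0_index[OF True] by (simp add: vnorm_def scalar_prod_def)
  then show ?thesis
    using True by simp
next
  case False
  then have pos: "vnorm v > 0"
    using vnorm_nonneg[of v] by linarith
  define w where "w = complex_of_real (1 / vnorm v) \<cdot>\<^sub>v v"
  have w: "w \<in> carrier_vec (dim_col B)" "vnorm w \<le> 1"
    using v pos by (auto simp: w_def vnorm_smult norm_divide)
  have "B *\<^sub>v w = complex_of_real (1 / vnorm v) \<cdot>\<^sub>v (B *\<^sub>v v)"
    unfolding w_def using v by (intro mult_mat_vec[of _ "dim_row B" "dim_col B"]) auto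
  then have "vnorm (B *\<^sub>v v) / vnorm v \<le> opnorm B"
    using vnorm_mult_le_opnorm[OF w] pos by (simp add: vnorm_smult norm_divide)
  then show ?thesis
    using pos by (simp add: divide_le_eq mult.commute)
qed

lemma opnorm_leI:
  assumes c: "0 \<le> c"
    and bound: "\<And>v. v \<in> carrier_vec (dim_col B) \<Longrightarrow> vnorm (B *\<^sub>v v) \<le> c * vnorm v"
  shows "opnorm B \<le> c"
  unfolding opnorm_def
proof (rule cSup_least)
  show "{vnorm (B *\<^sub>v v) |v. v \<in> carrier_vec (dim_col B) \<and> vnorm v \<le> 1} \<noteq> {}"
    by (auto intro!: exI[of _ "0\<^sub>v (dim_col B)"] simp: vnorm_def)
  fix x assume "x \<in> {vnorm (B *\<^sub>v v) |v. v \<in> carrier_vec (dim_col B) \<and> vnorm v \<le> 1}"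
  then obtain v where v: "v \<in> carrier_vec (dim_col B)" "vnorm v \<le> 1" and x: "x = vnorm (B *\<^sub>v v)"
    by auto
  have "x \<le> c * vnorm v"
    using bound[OF v(1)] x by simp
  also have "\<dots> \<le> c"
    using v(2) c by (simp add: mult_left_le)
  finally show "x \<le> c" .
qed

lemma opnorm_add_le:
  fixes B C :: "complex mat"
  assumes "B \<in> carrier_mat nr nc" "C \<in> carrier_mat nr nc"
  shows "opnorm (B + C) \<le> opnorm B + opnorm C"
proof (rule opnorm_leI)
  show "0 \<le> opnorm B + opnorm C"
    by (simp add: opnorm_nonneg add_nonneg_nonneg)
  fix v :: "complex vec" assume "v \<in> carrier_vec (dim_col (B + C))"
  then have v: "v \<in> carrier_vec nc"
    using assms by simp
  have "vnorm ((B + C) *\<^sub>v v) \<le> vnorm (B *\<^sub>v v) + vnorm (C *\<^sub>v v)"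
    using assms v by (simp add: add_mult_distrib_mat_vec vnorm_add_le)
  also have "\<dots> \<le> opnorm B * vnorm v + opnorm C * vnorm v"
    using vnorm_mult_mat_vec_le[of v B] vnorm_mult_mat_vec_le[of v C] assms v by (intro add_mono) auto
  finally show "vnorm ((B + C) *\<^sub>v v) \<le> (opnorm B + opnorm C) * vnorm v"
    by (simp add: algebra_simps)
qed

lemma opnorm_mult_le:
  fixes B C :: "complex mat"
  assumes "B \<in> carrier_mat nr m" "C \<in> carrier_mat m nc"
  shows "opnorm (B * C) \<le> opnorm B * opnorm C"
proof (rule opnorm_leI)
  show "0 \<le> opnorm B * opnorm C"
    by (simp add: opnorm_nonneg)
  fix v :: "complex vec" assume "v \<in> carrier_vec (dim_col (B * C))"
  then have v: "v \<in> carrier_vec nc"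
    using assms by simp
  have "vnorm ((B * C) *\<^sub>v v) = vnorm (B *\<^sub>v (C *\<^sub>v v))"
    using assms v by simp
  also have "\<dots> \<le> opnorm B * vnorm (C *\<^sub>v v)"
    using assms v by (intro vnorm_mult_mat_vec_le) auto
  also have "\<dots> \<le> opnorm B * (opnorm C * vnorm v)"
    using assms v opnorm_nonneg[of B] by (intro mult_left_mono vnorm_mult_mat_vec_le) auto
  finally show "vnorm ((B * C) *\<^sub>v v) \<le> opnorm B * opnorm C * vnorm v"
    by (simp add: mult.assoc)
qed

lemma opnorm_smult_le: "opnorm (a \<cdot>\<^sub>m B) \<le> cmod a * opnorm B"
proof (rule opnorm_leI)
  show "0 \<le> cmod a * opnorm B"
    by (simp add: opnorm_nonneg)
  fix v :: "complex vec" assume v: "v \<in> carrier_vec (dim_col (a \<cdot>\<^sub>m B))"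
  have "(a \<cdot>\<^sub>m B) *\<^sub>v v = a \<cdot>\<^sub>v (B *\<^sub>v v)"
    using v by (intro eq_vecI) (auto simp: scalar_prod_def row_def sum_distrib_left ac_simps)
  then have "vnorm ((a \<cdot>\<^sub>m B) *\<^sub>v v) = cmod a * vnorm (B *\<^sub>v v)"
    by (simp add: vnorm_smult)
  also have "\<dots> \<le> cmod a * (opnorm B * vnorm v)"
    using v by (intro mult_left_mono vnorm_mult_mat_vec_le) auto
  finally show "vnorm ((a \<cdot>\<^sub>m B) *\<^sub>v v) \<le> cmod a * opnorm B * vnorm v"
    by (simp add: mult.assoc)
qed

lemma opnorm_minus_self: "A \<in> carrier_mat nr nc \<Longrightarrow> opnorm (A - A) = 0"
  by (intro antisym opnorm_leI) (auto simp: vnorm_def scalar_prod_def row_def opnorm_nonneg)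

lemma top_block_carrier [simp]: "top_block d U \<in> carrier_mat d d"
  by (simp add: top_block_def)

lemma opnorm_top_block_le:
  fixes X :: "complex mat"
  assumes X: "X \<in> carrier_mat N N" and d: "d \<le> N"
  shows "opnorm (top_block d X) \<le> opnorm X"
proof (rule opnorm_leI[OF opnorm_nonneg])
  fix v :: "complex vec" assume "v \<in> carrier_vec (dim_col (top_block d X))"
  then have v: "v \<in> carrier_vec d"
    by (simp add: top_block_def)
  define w where "w = vec N (\<lambda>i. if i < d then v $ i else 0)"
  have w: "w \<in> carrier_vec N"
    by (simp add: w_def)
  have "(vnorm w)\<^sup>2 = (\<Sum>i<d. (cmod (w $ i))\<^sup>2)"
    unfolding power2_vnorm using d by (intro sum.mono_neutral_right) (auto simp: w_def)
  also have "\<dots> = (vnorm v)\<^sup>2"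
    using v d by (simp add: power2_vnorm w_def)
  finally have wv: "vnorm w = vnorm v"
    by (simp add: power2_eq_iff_nonneg)
  have same: "(top_block d X *\<^sub>v v) $ i = (X *\<^sub>v w) $ i" if i: "i < d" for i
  proof -
    have "(top_block d X *\<^sub>v v) $ i = (\<Sum>j<d. X $$ (i, j) * w $ j)"
      using i v d by (simp add: scalar_prod_def atLeast0LessThan top_block_def w_def)
    also have "\<dots> = (\<Sum>j<N. X $$ (i, j) * w $ j)"
      using d by (intro sum.mono_neutral_left) (auto simp: w_def)
    also have "\<dots> = (X *\<^sub>v w) $ i"
      using i d w X by (simp add: scalar_prod_def atLeast0LessThan)
    finally show ?thesis .
  qed
  have "dim_vec (top_block d X *\<^sub>v v) = d"
    by (simp add: top_block_def)
  then have "(vnorm (top_block d X *\<^sub>v v))\<^sup>2 = (\<Sum>i<d. (cmod ((X *\<^sub>v w) $ i))\<^sup>2)"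
    unfolding power2_vnorm using same by (intro sum.cong) auto
  also have "\<dots> \<le> (\<Sum>i<N. (cmod ((X *\<^sub>v w) $ i))\<^sup>2)"
    using d by (intro sum_mono2) auto
  also have "\<dots> = (vnorm (X *\<^sub>v w))\<^sup>2"
    using X by (simp add: power2_vnorm)
  finally have "vnorm (top_block d X *\<^sub>v v) \<le> vnorm (X *\<^sub>v w)"
    by (simp add: power2_le_iff_abs_le)
  also have "\<dots> \<le> opnorm X * vnorm w"
    using w X by (intro vnorm_mult_mat_vec_le) simp
  finally show "vnorm (top_block d X *\<^sub>v v) \<le> opnorm X * vnorm v"
    unfolding wv .
qed

lemma sum_lessThan_add: "(\<Sum>r<(a::nat) + b. f r) = (\<Sum>r<a. f r) + (\<Sum>y<b. f (a + y))"
  by (induction b) (simp_all add: ac_simps)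

lemma sum_lessThan_mult: "(\<Sum>r<(p::nat) * q. f r) = (\<Sum>x<p. \<Sum>y<q. f (x * q + y))"
proof (induction p)
  case (Suc p)
  have "(\<Sum>r<Suc p * q. f r) = (\<Sum>r<p * q + q. f r)"
    by (simp add: ac_simps)
  then show ?case
    using Suc by (simp add: sum_lessThan_add)
qed simp

lemma mult_add_less_mult:
  assumes "j < m" "s < D"
  shows "j * D + s < m * (D::nat)"
proof -
  have "(j + 1) * D \<le> m * D"
    using assms(1) by (intro mult_right_mono) auto
  then show ?thesis
    using assms(2) by simp
qed

lemma mult_mat_vec_block_diag_index:
  assumes X: "X \<in> carrier_mat (m * D) (m * D)"
    and X_index: "\<And>r c. r < m * D \<Longrightarrow> c < m * D \<Longrightarrow>
      X $$ (r, c) = (if r div D = c div D then Y (r div D) $$ (r mod D, c mod D) else 0)"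
    and Y: "Y j \<in> carrier_mat D D" and v: "v \<in> carrier_vec (m * D)" and j: "j < m" and s: "s < D"
  shows "(X *\<^sub>v v) $ (j * D + s) = (Y j *\<^sub>v vec D (\<lambda>s'. v $ (j * D + s'))) $ s"
proof -
  have "(X *\<^sub>v v) $ (j * D + s) = (\<Sum>j'<m. \<Sum>s'<D. X $$ (j * D + s, j' * D + s') * v $ (j' * D + s'))"
    using v X mult_add_less_mult[OF j s] by (simp add: scalar_prod_def atLeast0LessThan sum_lessThan_mult)
  also have "\<dots> = (\<Sum>j'<m. if j' = j then (\<Sum>s'<D. Y j $$ (s, s') * v $ (j * D + s')) else 0)"
    using j s mult_add_less_mult[OF j s] mult_add_less_mult[of _ m _ D]
    by (intro sum.cong refl) (auto simp: X_index)
  also have "\<dots> = (Y j *\<^sub>v vec D (\<lambda>s'. v $ (j * D + s'))) $ s"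
    using j s Y by (simp add: scalar_prod_def atLeast0LessThan)
  finally show ?thesis .
qed

lemma opnorm_block_diag_le:
  fixes X :: "complex mat" and Y :: "nat \<Rightarrow> complex mat"
  assumes X: "X \<in> carrier_mat (m * D) (m * D)"
    and X_index: "\<And>r c. r < m * D \<Longrightarrow> c < m * D \<Longrightarrow>
      X $$ (r, c) = (if r div D = c div D then Y (r div D) $$ (r mod D, c mod D) else 0)"
    and Y: "\<And>j. j < m \<Longrightarrow> Y j \<in> carrier_mat D D \<and> opnorm (Y j) \<le> e" and e: "e \<ge> 0"
  shows "opnorm X \<le> e"
proof (rule opnorm_leI[OF e])
  fix v :: "complex vec" assume "v \<in> carrier_vec (dim_col X)"
  then have v: "v \<in> carrier_vec (m * D)"
    using X by simp
  define vj where "vj j = vec D (\<lambda>s. v $ (j * D + s))" for j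
  have block: "(X *\<^sub>v v) $ (j * D + s) = (Y j *\<^sub>v vj j) $ s" if "j < m" "s < D" for j s
    unfolding vj_def using Y[of j] that by (intro mult_mat_vec_block_diag_index[OF X X_index _ v]) auto
  have "(vnorm (X *\<^sub>v v))\<^sup>2 = (\<Sum>j<m. \<Sum>s<D. (cmod ((X *\<^sub>v v) $ (j * D + s)))\<^sup>2)"
    using X by (simp only: power2_vnorm dim_mult_mat_vec carrier_matD sum_lessThan_mult)
  also have "\<dots> = (\<Sum>j<m. (vnorm (Y j *\<^sub>v vj j))\<^sup>2)"
  proof (intro sum.cong refl)
    fix j assume j: "j \<in> {..<m}"
    then have "Y j \<in> carrier_mat D D"
      using Y by auto
    then show "(\<Sum>s<D. (cmod ((X *\<^sub>v v) $ (j * D + s)))\<^sup>2) = (vnorm (Y j *\<^sub>v vj j))\<^sup>2"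
      using j by (simp add: power2_vnorm block)
  qed
  also have "\<dots> \<le> (\<Sum>j<m. (e * vnorm (vj j))\<^sup>2)"
  proof (intro sum_mono)
    fix j assume j: "j \<in> {..<m}"
    have "vnorm (Y j *\<^sub>v vj j) \<le> opnorm (Y j) * vnorm (vj j)"
      using Y j by (intro vnorm_mult_mat_vec_le) (auto simp: vj_def)
    also have "\<dots> \<le> e * vnorm (vj j)"
      using Y j by (intro mult_right_mono) auto
    finally show "(vnorm (Y j *\<^sub>v vj j))\<^sup>2 \<le> (e * vnorm (vj j))\<^sup>2"
      by (intro power_mono) auto
  qed
  also have "\<dots> = (e * vnorm v)\<^sup>2"
    using v by (simp add: power_mult_distrib sum_distrib_left power2_vnorm vj_def sum_lessThan_mult)
  finally show "vnorm (X *\<^sub>v v) \<le> e * vnorm v"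
    using e by (simp add: power2_le_iff_abs_le)
qed

section \<open>Adjoints and unitary matrices\<close>

lemma dag_carrier [simp]: "dag A \<in> carrier_mat (dim_col A) (dim_row A)"
  by (simp add: dag_def)

lemma dag_dims [simp]: "dim_row (dag A) = dim_col A" "dim_col (dag A) = dim_row A"
  by (simp_all add: dag_def)

lemma dag_index [simp]: "i < dim_col A \<Longrightarrow> j < dim_row A \<Longrightarrow> dag A $$ (i, j) = cnj (A $$ (j, i))"
  by (simp add: dag_def)

lemma dag_dag [simp]: "dag (dag A) = A"
  by (intro eq_matI) auto

lemma dag_carrier_square: "A \<in> carrier_mat n n \<Longrightarrow> dag A \<in> carrier_mat n n"
  by (metis carrier_matD dag_carrier)

lemma dag_mult:
  assumes "A \<in> carrier_mat nr m" "B \<in> carrier_mat m nc"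
  shows "dag (A * B) = dag B * dag A"
proof (rule eq_matI)
  fix i j assume "i < dim_row (dag B * dag A)" "j < dim_col (dag B * dag A)"
  then have i: "i < nc" and j: "j < nr"
    using assms by auto
  have "dag (A * B) $$ (i, j) = (\<Sum>k<m. cnj (B $$ (k, i)) * cnj (A $$ (j, k)))"
    using assms i j by (simp add: scalar_prod_def atLeast0LessThan mult.commute)
  also have "\<dots> = (dag B * dag A) $$ (i, j)"
    using assms i j by (simp add: scalar_prod_def atLeast0LessThan)
  finally show "dag (A * B) $$ (i, j) = (dag B * dag A) $$ (i, j)" .
qed (use assms in auto)

definition vinner :: "complex vec \<Rightarrow> complex vec \<Rightarrow> complex" where
  "vinner u w = (\<Sum>i<dim_vec w. cnj (u $ i) * w $ i)"

lemma vinner_self: "vinner v v = complex_of_real ((vnorm v)\<^sup>2)"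
proof -
  have "vinner v v = (\<Sum>i<dim_vec v. complex_of_real ((cmod (v $ i))\<^sup>2))"
    unfolding vinner_def by (intro sum.cong refl) (metis complex_norm_square mult.commute of_real_power)
  then show ?thesis
    by (simp add: power2_vnorm)
qed

lemma vinner_adjoint:
  assumes A: "A \<in> carrier_mat nr nc" and v: "v \<in> carrier_vec nc" and w: "w \<in> carrier_vec nr"
  shows "vinner (A *\<^sub>v v) w = vinner v (dag A *\<^sub>v w)"
proof -
  have "vinner (A *\<^sub>v v) w = (\<Sum>i<nr. cnj (\<Sum>k<nc. A $$ (i, k) * v $ k) * w $ i)"
    unfolding vinner_def using A v w by (simp add: scalar_prod_def atLeast0LessThan)
  also have "\<dots> = (\<Sum>i<nr. \<Sum>k<nc. cnj (v $ k) * (cnj (A $$ (i, k)) * w $ i))"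
    by (simp only: cnj_sum complex_cnj_mult sum_distrib_right) (simp add: ac_simps)
  also have "\<dots> = (\<Sum>k<nc. \<Sum>i<nr. cnj (v $ k) * (cnj (A $$ (i, k)) * w $ i))"
    by (rule sum.swap)
  also have "\<dots> = vinner v (dag A *\<^sub>v w)"
    unfolding vinner_def using A v w by (simp add: scalar_prod_def atLeast0LessThan sum_distrib_left)
  finally show ?thesis .
qed

lemma norm_vinner_le:
  assumes "dim_vec u = dim_vec w"
  shows "cmod (vinner u w) \<le> vnorm u * vnorm w"
proof -
  have "cmod (vinner u w) \<le> (\<Sum>i<dim_vec w. cmod (cnj (u $ i) * w $ i))"
    unfolding vinner_def by (rule norm_sum)
  also have "\<dots> = (\<Sum>i<dim_vec w. \<bar>cmod (u $ i)\<bar> * \<bar>cmod (w $ i)\<bar>)"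
    by (simp add: norm_mult)
  also have "\<dots> \<le> L2_set (\<lambda>i. cmod (u $ i)) {..<dim_vec w} * L2_set (\<lambda>i. cmod (w $ i)) {..<dim_vec w}"
    by (rule L2_set_mult_ineq)
  finally show ?thesis
    using assms by (simp add: vnorm_eq_L2_set)
qed

lemma opnorm_dag_le: "opnorm (dag E) \<le> opnorm E"
proof (rule opnorm_leI[OF opnorm_nonneg])
  fix v :: "complex vec" assume "v \<in> carrier_vec (dim_col (dag E))"
  then have v: "v \<in> carrier_vec (dim_row E)"
    by simp
  let ?w = "dag E *\<^sub>v v"
  have w: "?w \<in> carrier_vec (dim_col E)"
    by (rule mult_mat_vec_carrier[OF dag_carrier v])
  have "complex_of_real ((vnorm ?w)\<^sup>2) = vinner v (E *\<^sub>v ?w)"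
    using vinner_adjoint[OF dag_carrier v w] by (simp add: vinner_self)
  then have "(vnorm ?w)\<^sup>2 = cmod (vinner v (E *\<^sub>v ?w))"
    by (metis abs_of_nonneg norm_of_real zero_le_power2)
  also have "\<dots> \<le> vnorm v * vnorm (E *\<^sub>v ?w)"
    using v by (intro norm_vinner_le) simp
  also have "\<dots> \<le> vnorm v * (opnorm E * vnorm ?w)"
    using w by (intro mult_left_mono vnorm_mult_mat_vec_le) simp_all
  finally have "vnorm ?w * vnorm ?w \<le> (opnorm E * vnorm v) * vnorm ?w"
    by (simp add: power2_eq_square ac_simps)
  then show "vnorm ?w \<le> opnorm E * vnorm v"
    using opnorm_nonneg[of E] vnorm_nonneg[of ?w]
    by (cases "vnorm ?w = 0") (auto simp: mult_le_cancel_right)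
qed

lemma unitaryD:
  assumes "is_unitary U"
  shows "U \<in> carrier_mat (dim_row U) (dim_row U)" "dag U * U = 1\<^sub>m (dim_row U)"
  using assms unfolding is_unitary_def by (rule conjunct1, rule conjunct2)

lemma unitary_vnorm_mult:
  assumes U: "is_unitary U" and v: "v \<in> carrier_vec (dim_row U)"
  shows "vnorm (U *\<^sub>v v) = vnorm v"
proof -
  let ?n = "dim_row U"
  note U' = unitaryD[OF U]
  have Uv: "U *\<^sub>v v \<in> carrier_vec ?n"
    using U'(1) v by (rule mult_mat_vec_carrier)
  have "vinner (U *\<^sub>v v) (U *\<^sub>v v) = vinner v (dag U *\<^sub>v (U *\<^sub>v v))"
    by (rule vinner_adjoint[OF U'(1) v Uv])
  also have "dag U *\<^sub>v (U *\<^sub>v v) = (dag U * U) *\<^sub>v v"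
    by (rule assoc_mult_mat_vec[symmetric, OF dag_carrier_square[OF U'(1)] U'(1) v])
  also have "\<dots> = v"
    unfolding U'(2) using v by (rule one_mult_mat_vec)
  finally have "(vnorm (U *\<^sub>v v))\<^sup>2 = (vnorm v)\<^sup>2"
    unfolding vinner_self of_real_eq_iff .
  then show ?thesis
    by (simp add: power2_eq_iff_nonneg)
qed

lemma unitary_opnorm_le:
  assumes "is_unitary U"
  shows "opnorm U \<le> 1"
proof (rule opnorm_leI)
  have "dim_col U = dim_row U"
    using unitaryD(1)[OF assms] by (rule carrier_matD(2))
  then show "vnorm (U *\<^sub>v v) \<le> 1 * vnorm v" if "v \<in> carrier_vec (dim_col U)" for v
    using that unitary_vnorm_mult[OF assms] by simp
qed simp

lemma dag_one [simp]: "dag (1\<^sub>m n) = 1\<^sub>m n"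
  by (intro eq_matI) auto

lemma unitary_one: "is_unitary (1\<^sub>m n)"
  by (simp add: is_unitary_def)

lemma unitary_mult:
  assumes A: "is_unitary A" "dim_row A = n" and B: "is_unitary B" "dim_row B = n"
  shows "is_unitary (A * B)"
proof -
  have A': "A \<in> carrier_mat n n" "dag A * A = 1\<^sub>m n" and B': "B \<in> carrier_mat n n" "dag B * B = 1\<^sub>m n"
    using unitaryD[OF A(1)] unitaryD[OF B(1)] unfolding A(2) B(2) by auto
  have dA: "dag A \<in> carrier_mat n n" and dB: "dag B \<in> carrier_mat n n"
    using A'(1) B'(1) by (simp_all add: dag_carrier_square)
  have AB: "A * B \<in> carrier_mat n n"
    using A'(1) B'(1) by (rule mult_carrier_mat)
  have AAB: "dag A * (A * B) = B"
    unfolding assoc_mult_mat[OF dA A'(1) B'(1), symmetric] A'(2) using B'(1) by (rule left_mult_one_mat)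
  have "dag (A * B) * (A * B) = 1\<^sub>m n"
    unfolding dag_mult[OF A'(1) B'(1)] assoc_mult_mat[OF dB dA AB] AAB by (rule B'(2))
  then show ?thesis
    using AB A(2) unfolding is_unitary_def by simp
qed

lemma unitary_dag:
  assumes U: "is_unitary U"
  shows "is_unitary (dag U)"
proof -
  let ?n = "dim_row U"
  note U' = unitaryD[OF U]
  have dU: "dag U \<in> carrier_mat ?n ?n"
    using U'(1) by (rule dag_carrier_square)
  have "U * dag U = 1\<^sub>m ?n"
    by (rule mat_mult_left_right_inverse[OF dU U'(1) U'(2)])
  moreover have "dim_row (dag U) = ?n"
    using dU by (rule carrier_matD(1))
  ultimately show ?thesis
    using dU unfolding is_unitary_def by simp
qed

lemma diagonal_mult_index:
  assumes X: "X \<in> carrier_mat N N"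
    and X_index: "\<And>q q'. q < N \<Longrightarrow> q' < N \<Longrightarrow> X $$ (q, q') = (if q = q' then p q else 0)"
    and Z: "Z \<in> carrier_mat N nc" and q: "q < N" and c: "c < nc"
  shows "(X * Z) $$ (q, c) = p q * Z $$ (q, c)"
proof -
  have "(X * Z) $$ (q, c) = (\<Sum>i<N. X $$ (q, i) * Z $$ (i, c))"
    by (rule index_mult_mat_sum[OF X Z q c])
  also have "\<dots> = (\<Sum>i<N. if q = i then p q * Z $$ (i, c) else 0)"
    using q by (intro sum.cong refl) (simp add: X_index)
  also have "\<dots> = p q * Z $$ (q, c)"
    using q by simp
  finally show ?thesis .
qed

lemma diagonal_unitary:
  assumes X: "X \<in> carrier_mat N N"
    and X_index: "\<And>q q'. q < N \<Longrightarrow> q' < N \<Longrightarrow> X $$ (q, q') = (if q = q' then p q else 0)"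
    and p: "\<And>q. q < N \<Longrightarrow> cmod (p q) = 1"
  shows "is_unitary X"
proof -
  have dX: "dag X \<in> carrier_mat N N"
    using X by (rule dag_carrier_square)
  have dX_index: "dag X $$ (q, q') = (if q = q' then cnj (p q) else 0)" if "q < N" "q' < N" for q q'
    using X that by (simp add: X_index)
  have "dag X * X = 1\<^sub>m N"
  proof (rule eq_matI)
    fix r c assume "r < dim_row (1\<^sub>m N)" "c < dim_col (1\<^sub>m N)"
    then have r: "r < N" and c: "c < N"
      by auto
    have "cnj (p r) * p r = complex_of_real ((cmod (p r))\<^sup>2)"
      by (metis complex_norm_square mult.commute)
    then have "cnj (p r) * p r = 1"
      using p[OF r] by simp
    then show "(dag X * X) $$ (r, c) = 1\<^sub>m N $$ (r, c)"
      using r c by (auto simp: diagonal_mult_index[OF dX dX_index X r c] X_index)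
  qed (use X in auto)
  then show ?thesis
    using X unfolding is_unitary_def by (simp add: carrier_matD(1)[OF X])
qed

lemma mult_minus_mult_eq:
  fixes G G' C C' :: "complex mat"
  assumes G: "G \<in> carrier_mat N N" "G' \<in> carrier_mat N N"
    and C: "C \<in> carrier_mat N N" "C' \<in> carrier_mat N N"
  shows "G * C - G' * C' = G * (C - C') + (G - G') * C'"
proof (rule eq_matI)
  fix i j assume "i < dim_row (G * (C - C') + (G - G') * C')" "j < dim_col (G * (C - C') + (G - G') * C')"
  then have i: "i < N" and j: "j < N"
    using G C by auto
  have "(G * (C - C')) $$ (i, j) = (G * C) $$ (i, j) - (G * C') $$ (i, j)"
    using G C i j by (simp add: mult_minus_distrib_mat)
  moreover have "((G - G') * C') $$ (i, j) = (G * C') $$ (i, j) - (G' * C') $$ (i, j)"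
    using G C i j by (simp add: minus_mult_distrib_mat)
  ultimately show "(G * C - G' * C') $$ (i, j) = (G * (C - C') + (G - G') * C') $$ (i, j)"
    using G C i j by simp
qed (use G C in auto)

section \<open>The register\<close>

text \<open>Dimension of everything below the two new ancillas: basis index \<open>r\<close> carries the
  ancilla value \<open>r div lower_dim n M mA\<close>.\<close>
definition lower_dim :: "nat \<Rightarrow> nat \<Rightarrow> nat \<Rightarrow> nat" where
  "lower_dim n M mA = 2^n * M * 2^mA"

definition reg_index :: "nat \<Rightarrow> nat \<Rightarrow> nat \<Rightarrow> nat \<Rightarrow> nat \<Rightarrow> nat \<Rightarrow> nat \<Rightarrow> nat" where
  "reg_index n M mA a b j s = ((a * 2^mA + b) * M + j) * 2^n + s"

lemma full_dim_eq: "full_dim n M mA = 4 * lower_dim n M mA"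
  by (simp add: full_dim_def lower_dim_def ac_simps)

lemma sum_full_dim:
  "(\<Sum>q<full_dim n M mA. g q) = (\<Sum>a<4. \<Sum>b<2^mA. \<Sum>j<M. \<Sum>s<2^n. g (reg_index n M mA a b j s))"
proof -
  have "full_dim n M mA = ((4 * 2^mA) * M) * 2^n"
    by (simp add: full_dim_def)
  then show ?thesis
    by (simp add: sum_lessThan_mult reg_index_def)
qed

lemma idx_reg_index:
  assumes "b < 2^mA" "j < M" "s < 2^n"
  shows "idx_a n M mA (reg_index n M mA a b j s) = a" "idx_b n M mA (reg_index n M mA a b j s) = b"
    "idx_j n M mA (reg_index n M mA a b j s) = j" "idx_s n M mA (reg_index n M mA a b j s) = s"
  using assms by (simp_all add: reg_index_def idx_a_def idx_b_def idx_j_def idx_s_def div_mult2_eq)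

lemma idx_less:
  assumes "r < full_dim n M mA"
  shows "idx_a n M mA r < 4" "idx_b n M mA r < 2^mA" "idx_j n M mA r < M" "idx_s n M mA r < 2^n"
proof -
  show "idx_a n M mA r < 4"
    using assms by (simp add: idx_a_def full_dim_def less_mult_imp_div_less ac_simps)
  have "M > 0"
    using assms by (cases "M = 0") (auto simp: full_dim_def)
  then show "idx_j n M mA r < M"
    by (simp add: idx_j_def)
qed (simp_all add: idx_b_def idx_s_def)

lemma reg_index_idx:
  "reg_index n M mA (idx_a n M mA r) (idx_b n M mA r) (idx_j n M mA r) (idx_s n M mA r) = r"
proof -
  have "(r div 2^n) * 2^n + r mod 2^n = r"
    "((r div 2^n) div M) * M + (r div 2^n) mod M = r div 2^n"
    "((r div 2^n) div M div 2^mA) * 2^mA + ((r div 2^n) div M) mod 2^mA = (r div 2^n) div M"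
    by (rule div_mult_mod_eq)+
  then show ?thesis
    unfolding reg_index_def idx_a_def idx_b_def idx_j_def idx_s_def div_mult2_eq by metis
qed

lemma reg_index_less:
  assumes "a < 4" "b < 2^mA" "j < M" "s < 2^n"
  shows "reg_index n M mA a b j s < full_dim n M mA"
  unfolding reg_index_def full_dim_def
  using assms by (intro mult_add_less_mult) simp_all

lemma idx_a_eq_div: "idx_a n M mA r = r div lower_dim n M mA"
  by (simp add: idx_a_def lower_dim_def)

lemma anc_index_less: "a < 4 \<Longrightarrow> w < lower_dim n M mA \<Longrightarrow> a * lower_dim n M mA + w < full_dim n M mA"
  unfolding full_dim_eq by (rule mult_add_less_mult)

text \<open>Positions in the top-left block: the \<open>U\<^sub>A\<close> ancillas are zero.\<close>
lemma idx_anc_index: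
  assumes "a < 4" "r < M * 2^n"
  shows "idx_a n M mA (a * lower_dim n M mA + r) = a" "idx_b n M mA (a * lower_dim n M mA + r) = 0"
    "idx_j n M mA (a * lower_dim n M mA + r) = r div 2^n"
    "idx_s n M mA (a * lower_dim n M mA + r) = r mod 2^n"
proof -
  have "a * lower_dim n M mA + r = reg_index n M mA a 0 (r div 2^n) (r mod 2^n)"
    by (simp add: reg_index_def lower_dim_def algebra_simps)
  moreover have "r div 2^n < M"
    using assms(2) by (simp add: less_mult_imp_div_less)
  ultimately show "idx_a n M mA (a * lower_dim n M mA + r) = a" "idx_b n M mA (a * lower_dim n M mA + r) = 0"
    "idx_j n M mA (a * lower_dim n M mA + r) = r div 2^n"
    "idx_s n M mA (a * lower_dim n M mA + r) = r mod 2^n"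
    by (simp_all add: idx_reg_index)
qed

lemma top_index_less_lower_dim: "r < M * 2^n \<Longrightarrow> r < lower_dim n M mA"
  by (erule less_le_trans) (simp add: lower_dim_def)

text \<open>Index into the space \<open>U\<^sub>A\<close> acts on (its ancillas, then the system).\<close>
definition ua_index :: "nat \<Rightarrow> nat \<Rightarrow> nat \<Rightarrow> nat \<Rightarrow> nat" where
  "ua_index n M mA q = idx_b n M mA q * 2^n + idx_s n M mA q"

lemma ua_index_less: "q < full_dim n M mA \<Longrightarrow> ua_index n M mA q < 2^mA * 2^n"
  unfolding ua_index_def by (intro mult_add_less_mult idx_less)

lemma eq_iff_ua_index_eq:
  assumes "q < full_dim n M mA" "r < full_dim n M mA"
    and "idx_a n M mA q = idx_a n M mA r" "idx_j n M mA q = idx_j n M mA r"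
  shows "q = r \<longleftrightarrow> ua_index n M mA q = ua_index n M mA r"
proof
  assume "ua_index n M mA q = ua_index n M mA r"
  then have "ua_index n M mA q div 2^n = ua_index n M mA r div 2^n"
    "ua_index n M mA q mod 2^n = ua_index n M mA r mod 2^n"
    by simp_all
  then have "idx_b n M mA q = idx_b n M mA r" "idx_s n M mA q = idx_s n M mA r"
    using idx_less[OF assms(1)] idx_less[OF assms(2)] by (simp_all add: ua_index_def)
  then show "q = r"
    using reg_index_idx[of n M mA q] reg_index_idx[of n M mA r] assms(3,4) by metis
qed simp

section \<open>Gates on the two new ancillas\<close>

text \<open>The \<open>4 \<times> 4\<close> matrix of the single-qubit gate \<open>W\<close> acting on qubit \<open>t\<close> of the two new
  ancillas.\<close>
definition anc_op :: "nat \<Rightarrow> complex mat \<Rightarrow> nat \<Rightarrow> nat \<Rightarrow> complex" where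
  "anc_op t W a a' = (if (\<forall>t'<2. t' \<noteq> t \<longrightarrow> abit t' a = abit t' a')
      then W $$ (if abit t a then 1 else 0, if abit t a' then 1 else 0) else 0)"

text \<open>\<open>\<langle>a, r| Z |a', c\<rangle>\<close>, where \<open>a, a' < 4\<close> are values of the two new ancillas and
  \<open>r, c < lower_dim n M mA\<close> basis states of the rest of the register.\<close>
definition anc_block :: "nat \<Rightarrow> nat \<Rightarrow> nat \<Rightarrow> complex mat \<Rightarrow> nat \<Rightarrow> nat \<Rightarrow> nat \<Rightarrow> nat \<Rightarrow> complex" where
  "anc_block n M mA Z r c a a' = Z $$ (a * lower_dim n M mA + r, a' * lower_dim n M mA + c)"

lemma on_anc_carrier [simp]: "on_anc n M mA t W \<in> carrier_mat (full_dim n M mA) (full_dim n M mA)"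
  by (simp add: on_anc_def)

lemma on_anc_dims [simp]:
  "dim_row (on_anc n M mA t W) = full_dim n M mA" "dim_col (on_anc n M mA t W) = full_dim n M mA"
  by (simp_all add: on_anc_def)

lemma on_anc_index:
  "r < full_dim n M mA \<Longrightarrow> c < full_dim n M mA \<Longrightarrow> on_anc n M mA t W $$ (r, c) =
    (if r mod lower_dim n M mA = c mod lower_dim n M mA
     then anc_op t W (r div lower_dim n M mA) (c div lower_dim n M mA) else 0)"
  by (simp add: on_anc_def Let_def idx_a_def lower_dim_def anc_op_def)

lemma on_anc_anc_index:
  assumes "a < 4" "b < 4" "r < lower_dim n M mA" "w < lower_dim n M mA"
  shows "on_anc n M mA t W $$ (a * lower_dim n M mA + r, b * lower_dim n M mA + w) =
    (if r = w then anc_op t W a b else 0)"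
  using assms by (simp add: on_anc_index anc_index_less)

lemma eq_mat_by_anc_block:
  assumes X: "X \<in> carrier_mat (full_dim n M mA) (full_dim n M mA)"
    and Y: "Y \<in> carrier_mat (full_dim n M mA) (full_dim n M mA)"
    and blocks: "\<And>a a' r c. a < 4 \<Longrightarrow> a' < 4 \<Longrightarrow> r < lower_dim n M mA \<Longrightarrow> c < lower_dim n M mA \<Longrightarrow>
      anc_block n M mA X r c a a' = anc_block n M mA Y r c a a'"
  shows "X = Y"
proof (rule eq_matI)
  let ?K = "lower_dim n M mA"
  fix i j assume "i < dim_row Y" "j < dim_col Y"
  then have "i < 4 * ?K" "j < 4 * ?K"
    using Y by (simp_all add: full_dim_eq)
  then have "i div ?K < 4" "j div ?K < 4" "i mod ?K < ?K" "j mod ?K < ?K"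
    by (simp_all add: less_mult_imp_div_less)
  then show "X $$ (i, j) = Y $$ (i, j)"
    using blocks[of "i div ?K" "j div ?K" "i mod ?K" "j mod ?K"] by (simp add: anc_block_def)
qed (use X Y in auto)

lemma anc_block_one:
  assumes "a < 4" "a' < 4" "r < lower_dim n M mA" "c < lower_dim n M mA"
  shows "anc_block n M mA (1\<^sub>m (full_dim n M mA)) r c a a' = (if a = a' \<and> r = c then 1 else 0)"
proof -
  let ?K = "lower_dim n M mA"
  have "a = a' \<and> r = c" if "a * ?K + r = a' * ?K + c"
  proof -
    have "(a * ?K + r) div ?K = (a' * ?K + c) div ?K" "(a * ?K + r) mod ?K = (a' * ?K + c) mod ?K"
      using that by simp_all
    then show ?thesis
      using assms(3,4) by simp
  qed
  then have "a * ?K + r = a' * ?K + c \<longleftrightarrow> a = a' \<and> r = c"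
    by blast
  then show ?thesis
    using assms by (simp add: anc_block_def anc_index_less)
qed

lemma anc_block_on_anc_mult:
  assumes Z: "Z \<in> carrier_mat (full_dim n M mA) (full_dim n M mA)"
    and a: "a < 4" "a' < 4" and r: "r < lower_dim n M mA" "c < lower_dim n M mA"
  shows "anc_block n M mA (on_anc n M mA t W * Z) r c a a' =
    (\<Sum>b<4. anc_op t W a b * anc_block n M mA Z r c b a')"
proof -
  let ?K = "lower_dim n M mA"
  have "anc_block n M mA (on_anc n M mA t W * Z) r c a a' =
      (\<Sum>i<4 * ?K. on_anc n M mA t W $$ (a * ?K + r, i) * Z $$ (i, a' * ?K + c))"
    unfolding anc_block_def using a r
    by (subst index_mult_mat_sum[OF on_anc_carrier Z]) (simp_all add: full_dim_eq mult_add_less_mult)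
  also have "\<dots> = (\<Sum>b<4. \<Sum>w<?K. on_anc n M mA t W $$ (a * ?K + r, b * ?K + w) * Z $$ (b * ?K + w, a' * ?K + c))"
    by (rule sum_lessThan_mult)
  also have "\<dots> = (\<Sum>b<4. \<Sum>w<?K. if w = r then anc_op t W a b * Z $$ (b * ?K + w, a' * ?K + c) else 0)"
    using a r by (intro sum.cong refl) (auto simp: on_anc_anc_index)
  finally show ?thesis
    using r by (simp add: anc_block_def)
qed

lemma anc_block_mult_on_anc:
  assumes Z: "Z \<in> carrier_mat (full_dim n M mA) (full_dim n M mA)"
    and a: "a < 4" "a' < 4" and r: "r < lower_dim n M mA" "c < lower_dim n M mA"
  shows "anc_block n M mA (Z * on_anc n M mA t W) r c a a' =
    (\<Sum>b<4. anc_block n M mA Z r c a b * anc_op t W b a')"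
proof -
  let ?K = "lower_dim n M mA"
  have "anc_block n M mA (Z * on_anc n M mA t W) r c a a' =
      (\<Sum>i<4 * ?K. Z $$ (a * ?K + r, i) * on_anc n M mA t W $$ (i, a' * ?K + c))"
    unfolding anc_block_def using a r
    by (subst index_mult_mat_sum[OF Z on_anc_carrier]) (simp_all add: full_dim_eq mult_add_less_mult)
  also have "\<dots> = (\<Sum>b<4. \<Sum>w<?K. Z $$ (a * ?K + r, b * ?K + w) * on_anc n M mA t W $$ (b * ?K + w, a' * ?K + c))"
    by (rule sum_lessThan_mult)
  also have "\<dots> = (\<Sum>b<4. \<Sum>w<?K. if w = c then Z $$ (a * ?K + r, b * ?K + w) * anc_op t W b a' else 0)"
    using a r by (intro sum.cong refl) (auto simp: on_anc_anc_index)
  finally show ?thesis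
    using r by (simp add: anc_block_def)
qed

lemma anc_block_diagonal_mult:
  assumes X: "X \<in> carrier_mat (full_dim n M mA) (full_dim n M mA)"
    and X_index: "\<And>q q'. q < full_dim n M mA \<Longrightarrow> q' < full_dim n M mA \<Longrightarrow>
      X $$ (q, q') = (if q = q' then p q else 0)"
    and Z: "Z \<in> carrier_mat (full_dim n M mA) (full_dim n M mA)"
    and a: "a < 4" "a' < 4" and r: "r < lower_dim n M mA" "c < lower_dim n M mA"
  shows "anc_block n M mA (X * Z) r c a a' = p (a * lower_dim n M mA + r) * anc_block n M mA Z r c a a'"
  unfolding anc_block_def using a r by (intro diagonal_mult_index[OF X X_index Z] anc_index_less)

lemma sum_4: "(\<Sum>a<(4::nat). f a) = f 0 + f 1 + f 2 + f 3"
  by (simp add: eval_nat_numeral)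

lemma less_4_cases: "x < (4::nat) \<longleftrightarrow> x = 0 \<or> x = 1 \<or> x = 2 \<or> x = 3"
  by auto

lemma all_less_4: "(\<forall>x<(4::nat). P x) \<longleftrightarrow> P 0 \<and> P 1 \<and> P 2 \<and> P 3"
  unfolding less_4_cases by auto

lemma all_less_2: "(\<forall>t<(2::nat). P t) \<longleftrightarrow> P 0 \<and> P 1"
  by (auto simp: less_2_cases_iff)

lemma hadamard_index:
  "hadamard $$ (0, 0) = 1 / sqrt 2" "hadamard $$ (0, 1) = 1 / sqrt 2"
  "hadamard $$ (1, 0) = 1 / sqrt 2" "hadamard $$ (1, 1) = - 1 / sqrt 2"
  "hadamard $$ (0, Suc 0) = 1 / sqrt 2" "hadamard $$ (Suc 0, 0) = 1 / sqrt 2"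
  "hadamard $$ (Suc 0, Suc 0) = - 1 / sqrt 2"
  by (simp_all add: hadamard_def)

lemma of_real_sqrt_2_square:
  "complex_of_real (sqrt 2) * complex_of_real (sqrt 2) = 2"
  "complex_of_real (1 / sqrt 2) * complex_of_real (1 / sqrt 2) = 1 / 2"
proof -
  show "complex_of_real (sqrt 2) * complex_of_real (sqrt 2) = 2"
    by (simp flip: of_real_mult)
  have "(1 / sqrt 2) * (1 / sqrt 2) = (1 / 2 :: real)"
    by (simp add: divide_simps)
  then show "complex_of_real (1 / sqrt 2) * complex_of_real (1 / sqrt 2) = 1 / 2"
    by (metis of_real_divide of_real_mult of_real_numeral of_real_1)
qed

lemma anc_op_hadamard_square:
  "t < 2 \<Longrightarrow> x < 4 \<Longrightarrow> y < 4 \<Longrightarrow>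
    (\<Sum>a<4. anc_op t hadamard x a * anc_op t hadamard a y) = (if x = y then 1 else 0)"
proof -
  have "\<forall>t<2. \<forall>x<4. \<forall>y<4.
      (\<Sum>a<4. anc_op t hadamard x a * anc_op t hadamard a y) = (if x = y then 1 else 0)"
    unfolding all_less_2 all_less_4 anc_op_def sum_4
    by (simp add: abit_def hadamard_index of_real_sqrt_2_square)
  then show "t < 2 \<Longrightarrow> x < 4 \<Longrightarrow> y < 4 \<Longrightarrow> ?thesis"
    by blast
qed

text \<open>The first row and column of \<open>H \<otimes> H\<close> are constant \<open>1/2\<close>.\<close>
lemma anc_op_hadamards_row:
  "a < 4 \<Longrightarrow> (\<Sum>b<4. anc_op 1 hadamard 0 b * anc_op 0 hadamard b a) = 1/2"
proof -
  have "\<forall>a<4. (\<Sum>b<4. anc_op 1 hadamard 0 b * anc_op 0 hadamard b a) = 1/2"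
    unfolding all_less_2 all_less_4 anc_op_def sum_4 by (simp add: abit_def hadamard_index of_real_sqrt_2_square)
  then show "a < 4 \<Longrightarrow> ?thesis"
    by blast
qed

lemma anc_op_hadamards_col:
  "a < 4 \<Longrightarrow> (\<Sum>b<4. anc_op 0 hadamard a b * anc_op 1 hadamard b 0) = 1/2"
proof -
  have "\<forall>a<4. (\<Sum>b<4. anc_op 0 hadamard a b * anc_op 1 hadamard b 0) = 1/2"
    unfolding all_less_2 all_less_4 anc_op_def sum_4 by (simp add: abit_def hadamard_index of_real_sqrt_2_square)
  then show "a < 4 \<Longrightarrow> ?thesis"
    by blast
qed

lemma dag_on_anc_hadamard: "dag (on_anc n M mA t hadamard) = on_anc n M mA t hadamard"
proof (rule eq_matI)
  have sym: "cnj (anc_op t hadamard x y) = anc_op t hadamard y x" for x y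
    by (auto simp: anc_op_def hadamard_def)
  fix i j assume "i < dim_row (on_anc n M mA t hadamard)" "j < dim_col (on_anc n M mA t hadamard)"
  then have "i < full_dim n M mA" "j < full_dim n M mA"
    by (simp_all add: on_anc_def)
  then show "dag (on_anc n M mA t hadamard) $$ (i, j) = on_anc n M mA t hadamard $$ (i, j)"
    by (simp add: on_anc_index sym)
qed (simp_all add: on_anc_def)

lemma on_anc_hadamard_unitary:
  assumes t: "t < 2"
  shows "is_unitary (on_anc n M mA t hadamard)"
proof -
  let ?H = "on_anc n M mA t hadamard" and ?N = "full_dim n M mA"
  have "?H * ?H = 1\<^sub>m ?N"
  proof (rule eq_mat_by_anc_block)
    fix a a' r c :: nat
    assume a: "a < 4" "a' < 4" and r: "r < lower_dim n M mA" "c < lower_dim n M mA"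
    have "anc_block n M mA (?H * ?H) r c a a' = (\<Sum>b<4. anc_op t hadamard a b * anc_block n M mA ?H r c b a')"
      by (rule anc_block_on_anc_mult[OF on_anc_carrier a r])
    also have "\<dots> = (\<Sum>b<4. anc_op t hadamard a b * (if r = c then anc_op t hadamard b a' else 0))"
      using a r by (intro sum.cong refl) (simp add: anc_block_def on_anc_anc_index)
    also have "\<dots> = anc_block n M mA (1\<^sub>m ?N) r c a a'"
      using a r t by (cases "r = c") (simp_all add: anc_block_one anc_op_hadamard_square)
    finally show "anc_block n M mA (?H * ?H) r c a a' = anc_block n M mA (1\<^sub>m ?N) r c a a'" .
  qed auto
  then show ?thesis
    unfolding is_unitary_def dag_on_anc_hadamard by (simp add: on_anc_def)
qed

lemma anc_block_hadamards_mult: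
  assumes Z: "Z \<in> carrier_mat (full_dim n M mA) (full_dim n M mA)"
    and a': "a' < 4" and r: "r < lower_dim n M mA" "c < lower_dim n M mA"
  shows "anc_block n M mA (on_anc n M mA 1 hadamard * (on_anc n M mA 0 hadamard * Z)) r c 0 a' =
    1/2 * (\<Sum>a<4. anc_block n M mA Z r c a a')"
proof -
  let ?h = "anc_op 1 hadamard" and ?h' = "anc_op 0 hadamard" and ?Z = "anc_block n M mA Z r c"
  have HZ: "on_anc n M mA 0 hadamard * Z \<in> carrier_mat (full_dim n M mA) (full_dim n M mA)"
    using on_anc_carrier Z by (rule mult_carrier_mat)
  have "anc_block n M mA (on_anc n M mA 1 hadamard * (on_anc n M mA 0 hadamard * Z)) r c 0 a' =
      (\<Sum>b<4. ?h 0 b * anc_block n M mA (on_anc n M mA 0 hadamard * Z) r c b a')"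
    using a' r by (intro anc_block_on_anc_mult[OF HZ]) simp_all
  also have "\<dots> = (\<Sum>b<4. ?h 0 b * (\<Sum>a<4. ?h' b a * ?Z a a'))"
    using a' r by (intro sum.cong refl) (simp add: anc_block_on_anc_mult[OF Z])
  also have "\<dots> = (\<Sum>a<4. (\<Sum>b<4. ?h 0 b * ?h' b a) * ?Z a a')"
    unfolding sum_distrib_left sum_distrib_right mult.assoc by (rule sum.swap)
  also have "\<dots> = (\<Sum>a<4. 1/2 * ?Z a a')"
    by (intro sum.cong refl) (subst anc_op_hadamards_row, simp_all)
  finally show ?thesis
    by (simp add: sum_distrib_left)
qed

lemma anc_block_mult_hadamards:
  assumes Z: "Z \<in> carrier_mat (full_dim n M mA) (full_dim n M mA)"
    and a: "a < 4" and r: "r < lower_dim n M mA" "c < lower_dim n M mA"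
  shows "anc_block n M mA ((Z * on_anc n M mA 0 hadamard) * on_anc n M mA 1 hadamard) r c a 0 =
    1/2 * (\<Sum>a'<4. anc_block n M mA Z r c a a')"
proof -
  let ?h = "anc_op 1 hadamard" and ?h' = "anc_op 0 hadamard" and ?Z = "anc_block n M mA Z r c"
  have ZH: "Z * on_anc n M mA 0 hadamard \<in> carrier_mat (full_dim n M mA) (full_dim n M mA)"
    using Z on_anc_carrier by (rule mult_carrier_mat)
  have "anc_block n M mA ((Z * on_anc n M mA 0 hadamard) * on_anc n M mA 1 hadamard) r c a 0 =
      (\<Sum>b<4. anc_block n M mA (Z * on_anc n M mA 0 hadamard) r c a b * ?h b 0)"
    using a r by (intro anc_block_mult_on_anc[OF ZH]) simp_all
  also have "\<dots> = (\<Sum>b<4. (\<Sum>a'<4. ?Z a a' * ?h' a' b) * ?h b 0)"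
    using a r by (intro sum.cong refl) (simp add: anc_block_mult_on_anc[OF Z])
  also have "\<dots> = (\<Sum>a'<4. ?Z a a' * (\<Sum>b<4. ?h' a' b * ?h b 0))"
    unfolding sum_distrib_left sum_distrib_right mult.assoc by (rule sum.swap)
  also have "\<dots> = (\<Sum>a'<4. 1/2 * ?Z a a')"
    by (intro sum.cong refl) (subst anc_op_hadamards_col, simp_all)
  finally show ?thesis
    by (simp add: sum_distrib_left)
qed

section \<open>Controlled calls\<close>

lemma ctrl_call_carrier [simp]:
  "ctrl_call n M mA c V \<in> carrier_mat (full_dim n M mA) (full_dim n M mA)"
  by (simp add: ctrl_call_def)

lemma ctrl_call_index:
  assumes q: "q < full_dim n M mA" and r: "r < full_dim n M mA"
  shows "ctrl_call n M mA c V $$ (q, r) =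
    (if idx_a n M mA q = idx_a n M mA r \<and> idx_j n M mA q = idx_j n M mA r
     then (if ctrl_sat c (idx_a n M mA q) (idx_j n M mA q) then V else 1\<^sub>m (2^mA * 2^n))
       $$ (ua_index n M mA q, ua_index n M mA r)
     else 0)"
  using q r eq_iff_ua_index_eq[OF q r] ua_index_less[OF q] ua_index_less[OF r]
  by (auto simp: ctrl_call_def ua_index_def)

lemma sum_if_const: "(\<Sum>x\<in>A. if P then f x else 0) = (if P then sum f A else 0)"
  by simp

lemma sum_delta_pair:
  assumes "a0 < (4::nat)" "j0 < (M::nat)"
  shows "(\<Sum>a<4. \<Sum>b<(B::nat). \<Sum>j<M. \<Sum>s<(S::nat). if a = a0 \<and> j = j0 then f a j b s else 0) =
    (\<Sum>b<B. \<Sum>s<S. f a0 j0 b s)"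
proof -
  have "(\<Sum>j<M. if a = a0 \<and> j = j0 then (\<Sum>s<S. f a j b s) else 0) =
      (if a = a0 then (\<Sum>s<S. f a j0 b s) else 0)" for a b
  proof -
    have "(\<Sum>j<M. if a = a0 \<and> j = j0 then (\<Sum>s<S. f a j b s) else 0) =
        (\<Sum>j<M. if j = j0 then (if a = a0 then (\<Sum>s<S. f a j b s) else 0) else 0)"
      by (intro sum.cong refl) auto
    then show ?thesis
      using assms(2) by simp
  qed
  then have "(\<Sum>a<4. \<Sum>b<B. \<Sum>j<M. \<Sum>s<S. if a = a0 \<and> j = j0 then f a j b s else 0) =
      (\<Sum>a<4. if a = a0 then (\<Sum>b<B. \<Sum>s<S. f a j0 b s) else 0)"
    by (simp only: sum_if_const)
  then show ?thesis
    using assms(1) by simp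
qed

lemma block_diag_column_inner:
  fixes G :: "nat \<Rightarrow> nat \<Rightarrow> complex mat"
  assumes X: "X \<in> carrier_mat (full_dim n M mA) (full_dim n M mA)"
    and X_index: "\<And>q r. q < full_dim n M mA \<Longrightarrow> r < full_dim n M mA \<Longrightarrow>
      X $$ (q, r) = (if idx_a n M mA q = idx_a n M mA r \<and> idx_j n M mA q = idx_j n M mA r
        then G (idx_a n M mA q) (idx_j n M mA q) $$ (ua_index n M mA q, ua_index n M mA r) else 0)"
    and G: "\<And>a j. G a j \<in> carrier_mat (2^mA * 2^n) (2^mA * 2^n)"
    and r: "r < full_dim n M mA" and c: "c < full_dim n M mA"
  shows "(\<Sum>q<full_dim n M mA. cnj (X $$ (q, r)) * X $$ (q, c)) =
    (if idx_a n M mA r = idx_a n M mA c \<and> idx_j n M mA r = idx_j n M mA c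
     then (let Gr = G (idx_a n M mA r) (idx_j n M mA r) in
       (dag Gr * Gr) $$ (ua_index n M mA r, ua_index n M mA c))
     else 0)"
proof -
  let ?a = "idx_a n M mA" and ?j = "idx_j n M mA" and ?u = "ua_index n M mA"
  let ?Gr = "G (?a r) (?j r)" and ?P = "?a r = ?a c \<and> ?j r = ?j c"
  let ?g = "\<lambda>p. cnj (?Gr $$ (p, ?u r)) * ?Gr $$ (p, ?u c)"
  have "(\<Sum>q<full_dim n M mA. cnj (X $$ (q, r)) * X $$ (q, c)) =
    (\<Sum>a<4. \<Sum>b<2^mA. \<Sum>j<M. \<Sum>s<2^n. if a = ?a r \<and> j = ?j r then
      (if ?P then ?g (b * 2^n + s) else 0) else 0)"
    unfolding sum_full_dim using r c
    by (intro sum.cong refl)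
      (auto simp: X_index reg_index_less idx_reg_index ua_index_def)
  also have "\<dots> = (\<Sum>b<2^mA. \<Sum>s<2^n. if ?P then ?g (b * 2^n + s) else 0)"
    by (rule sum_delta_pair[OF idx_less(1)[OF r] idx_less(3)[OF r]])
  also have "\<dots> = (if ?P then \<Sum>p<2^mA * 2^n. ?g p else 0)"
    by (simp only: sum_if_const sum_lessThan_mult)
  also have "(\<Sum>p<2^mA * 2^n. ?g p) = (dag ?Gr * ?Gr) $$ (?u r, ?u c)"
  proof -
    have "(dag ?Gr * ?Gr) $$ (?u r, ?u c) = (\<Sum>p<2^mA * 2^n. dag ?Gr $$ (?u r, p) * ?Gr $$ (p, ?u c))"
      by (rule index_mult_mat_sum[OF dag_carrier_square[OF G] G ua_index_less[OF r] ua_index_less[OF c]])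
    then show ?thesis
      using G[of "?a r" "?j r"] ua_index_less[OF r] by simp
  qed
  finally show ?thesis
    by (simp add: Let_def)
qed

lemma block_diag_unitary:
  fixes G :: "nat \<Rightarrow> nat \<Rightarrow> complex mat"
  assumes X: "X \<in> carrier_mat (full_dim n M mA) (full_dim n M mA)"
    and X_index: "\<And>q r. q < full_dim n M mA \<Longrightarrow> r < full_dim n M mA \<Longrightarrow>
      X $$ (q, r) = (if idx_a n M mA q = idx_a n M mA r \<and> idx_j n M mA q = idx_j n M mA r
        then G (idx_a n M mA q) (idx_j n M mA q) $$ (ua_index n M mA q, ua_index n M mA r) else 0)"
    and G: "\<And>a j. G a j \<in> carrier_mat (2^mA * 2^n) (2^mA * 2^n) \<and> is_unitary (G a j)"
  shows "is_unitary X"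
proof -
  let ?N = "full_dim n M mA"
  have GG: "dag (G a j) * G a j = 1\<^sub>m (2^mA * 2^n)" for a j
    using G[of a j] unitaryD(2)[of "G a j"] by (metis carrier_matD(1))
  have "dag X * X = 1\<^sub>m ?N"
  proof (rule eq_matI)
    fix r c assume "r < dim_row (1\<^sub>m ?N)" "c < dim_col (1\<^sub>m ?N)"
    then have r: "r < ?N" and c: "c < ?N"
      by auto
    have "(dag X * X) $$ (r, c) = (\<Sum>q<?N. dag X $$ (r, q) * X $$ (q, c))"
      by (rule index_mult_mat_sum[OF dag_carrier_square[OF X] X r c])
    also have "\<dots> = (\<Sum>q<?N. cnj (X $$ (q, r)) * X $$ (q, c))"
      using X r by (intro sum.cong refl) simp
    also have "\<dots> = 1\<^sub>m ?N $$ (r, c)"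
      using block_diag_column_inner[OF X X_index _ r c] G GG
        eq_iff_ua_index_eq[OF r c] ua_index_less[OF r] ua_index_less[OF c] r c
      by (auto simp: Let_def)
    finally show "(dag X * X) $$ (r, c) = 1\<^sub>m ?N $$ (r, c)" .
  qed (use X in auto)
  then show ?thesis
    using X unfolding is_unitary_def by simp
qed

lemma ctrl_call_unitary:
  assumes "is_unitary V" "V \<in> carrier_mat (2^mA * 2^n) (2^mA * 2^n)"
  shows "is_unitary (ctrl_call n M mA c V)"
  by (rule block_diag_unitary[where G = "\<lambda>a j. if ctrl_sat c a j then V else 1\<^sub>m (2^mA * 2^n)",
        OF ctrl_call_carrier ctrl_call_index])
    (use assms unitary_one in auto)

lemma ctrl_call_index_not_sat:
  assumes q: "q < full_dim n M mA" and x: "x < full_dim n M mA"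
    and not_sat: "\<not> ctrl_sat c (idx_a n M mA q) (idx_j n M mA q)"
  shows "ctrl_call n M mA c V $$ (q, x) = (if q = x then 1 else 0)"
  using eq_iff_ua_index_eq[OF q x] ua_index_less[OF q] ua_index_less[OF x] not_sat
  by (auto simp: ctrl_call_index[OF q x])

lemma ctrl_call_nonzero_same_anc:
  "q < full_dim n M mA \<Longrightarrow> x < full_dim n M mA \<Longrightarrow> ctrl_call n M mA c V $$ (q, x) \<noteq> 0 \<Longrightarrow>
    idx_a n M mA q = idx_a n M mA x"
  by (auto simp: ctrl_call_index split: if_splits)

definition anc0_off :: ctrl where
  "anc0_off = Ctrl (Some False) None None"

definition anc0_on :: ctrl where
  "anc0_on = Ctrl (Some True) None None"

lemma ctrl_sat_anc0 [simp]:
  "ctrl_sat anc0_off a j \<longleftrightarrow> \<not> abit 0 a" "ctrl_sat anc0_on a j \<longleftrightarrow> abit 0 a"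
  by (auto simp: anc0_off_def anc0_on_def)

lemma ctrl_call_pair_index:
  assumes q: "q < full_dim n M mA" and q': "q' < full_dim n M mA"
  shows "(ctrl_call n M mA anc0_on V1 * ctrl_call n M mA anc0_off V0) $$ (q, q') =
    (if abit 0 (idx_a n M mA q) then ctrl_call n M mA anc0_on V1 $$ (q, q')
     else ctrl_call n M mA anc0_off V0 $$ (q, q'))"
proof -
  let ?N = "full_dim n M mA" and ?C1 = "ctrl_call n M mA anc0_on V1"
    and ?C0 = "ctrl_call n M mA anc0_off V0"
  have "(?C1 * ?C0) $$ (q, q') = (\<Sum>x<?N. ?C1 $$ (q, x) * ?C0 $$ (x, q'))"
    using q q' by (simp add: index_mult_mat_sum[OF ctrl_call_carrier ctrl_call_carrier])
  also have "\<dots> = (if abit 0 (idx_a n M mA q) then ?C1 $$ (q, q') else ?C0 $$ (q, q'))"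
  proof (cases "abit 0 (idx_a n M mA q)")
    case False
    then have "(\<Sum>x<?N. ?C1 $$ (q, x) * ?C0 $$ (x, q')) = (\<Sum>x<?N. if q = x then ?C0 $$ (x, q') else 0)"
      using q by (intro sum.cong refl) (simp add: ctrl_call_index_not_sat)
    then show ?thesis
      using False q by simp
  next
    case True
    have "?C1 $$ (q, x) * ?C0 $$ (x, q') = (if x = q' then ?C1 $$ (q, x) else 0)" if x: "x < ?N" for x
      using ctrl_call_nonzero_same_anc[OF q x] True q' x
      by (cases "?C1 $$ (q, x) = 0") (auto simp: ctrl_call_index_not_sat)
    then have "(\<Sum>x<?N. ?C1 $$ (q, x) * ?C0 $$ (x, q')) = (\<Sum>x<?N. if x = q' then ?C1 $$ (q, x) else 0)"
      by (intro sum.cong refl) auto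
    then show ?thesis
      using True q' by simp
  qed
  finally show ?thesis .
qed

lemma anc_block_ctrl_call_pair:
  assumes a: "a < 4" "a' < 4" and r: "r < M * 2^n" "c < M * 2^n"
  shows "anc_block n M mA (ctrl_call n M mA anc0_on (dag UA) * ctrl_call n M mA anc0_off UA) r c a a' =
    (if a = a' \<and> r div 2^n = c div 2^n
     then (if abit 0 a then dag UA else UA) $$ (r mod 2^n, c mod 2^n) else 0)"
proof -
  let ?K = "lower_dim n M mA"
  have "a * ?K + r < full_dim n M mA" "a' * ?K + c < full_dim n M mA"
    using a r by (simp_all add: anc_index_less top_index_less_lower_dim)
  then show ?thesis
    unfolding anc_block_def
    using idx_anc_index[OF a(1) r(1), of mA] idx_anc_index[OF a(2) r(2), of mA]
    by (cases "a = a'") (simp_all add: ctrl_call_pair_index ctrl_call_index ua_index_def)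
qed

section \<open>Controlled rotations\<close>

definition rz_diag :: "real \<Rightarrow> bool \<Rightarrow> complex" where
  "rz_diag \<phi> b = (if b then cis (\<phi> / 2) else cis (- \<phi> / 2))"

definition rz_phase :: "ctrl \<Rightarrow> nat \<Rightarrow> real \<Rightarrow> nat \<Rightarrow> nat \<Rightarrow> complex" where
  "rz_phase c t \<phi> a j = (if ctrl_sat c a j then rz_diag \<phi> (abit t a) else 1)"

lemma anc_op_rz:
  "t < 2 \<Longrightarrow> x < 4 \<Longrightarrow> y < 4 \<Longrightarrow> anc_op t (rz \<phi>) x y = (if x = y then rz_diag \<phi> (abit t x) else 0)"
proof -
  have "\<forall>t<2. \<forall>x<4. \<forall>y<4. anc_op t (rz \<phi>) x y = (if x = y then rz_diag \<phi> (abit t x) else 0)"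
    unfolding all_less_2 all_less_4 anc_op_def by (simp add: abit_def rz_def rz_diag_def)
  then show "t < 2 \<Longrightarrow> x < 4 \<Longrightarrow> y < 4 \<Longrightarrow> ?thesis"
    by blast
qed

lemma rz_ideal_carrier [simp]:
  "rz_ideal n M mA c t \<phi> \<in> carrier_mat (full_dim n M mA) (full_dim n M mA)"
  by (simp add: rz_ideal_def)

lemma rz_ideal_index:
  assumes t: "t < 2" and q: "q < full_dim n M mA" and q': "q' < full_dim n M mA"
  shows "rz_ideal n M mA c t \<phi> $$ (q, q') =
    (if q = q' then rz_phase c t \<phi> (idx_a n M mA q) (idx_j n M mA q) else 0)"
proof -
  let ?K = "lower_dim n M mA"
  have "q div ?K < 4" "q' div ?K < 4"
    using q q' by (simp_all add: full_dim_eq less_mult_imp_div_less)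
  moreover have "q mod ?K = q' mod ?K \<and> q div ?K = q' div ?K \<longleftrightarrow> q = q'"
    by (metis div_mult_mod_eq)
  ultimately show ?thesis
    using q q' t by (auto simp: rz_ideal_def on_anc_index anc_op_rz rz_phase_def idx_a_eq_div)
qed

lemma rz_ideal_unitary: "t < 2 \<Longrightarrow> is_unitary (rz_ideal n M mA c t \<phi>)"
  by (rule diagonal_unitary[OF rz_ideal_carrier rz_ideal_index]) (auto simp: rz_phase_def rz_diag_def)

section \<open>Circuits\<close>

lemma circuit_mat_Nil: "circuit_mat n M mA UA R [] = 1\<^sub>m (full_dim n M mA)"
  by (simp add: circuit_mat_def)

lemma circuit_mat_snoc:
  "circuit_mat n M mA UA R (gs @ [g]) = gate_mat n M mA UA R g * circuit_mat n M mA UA R gs"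
  by (simp add: circuit_mat_def)

lemma gate_mat_ideal_carrier [simp]:
  "gate_mat n M mA UA (rz_ideal n M mA) g \<in> carrier_mat (full_dim n M mA) (full_dim n M mA)"
  by (cases g) auto

lemma circuit_mat_carrier:
  assumes "\<And>g. g \<in> set gs \<Longrightarrow> gate_mat n M mA UA R g \<in> carrier_mat (full_dim n M mA) (full_dim n M mA)"
  shows "circuit_mat n M mA UA R gs \<in> carrier_mat (full_dim n M mA) (full_dim n M mA)"
  using assms
proof (induction gs rule: rev_induct)
  case (snoc g gs)
  then show ?case
    unfolding circuit_mat_snoc by (intro mult_carrier_mat[of _ "full_dim n M mA" "full_dim n M mA"]) auto
qed (simp add: circuit_mat_Nil)

lemma circuit_mat_append:
  assumes "\<And>g. g \<in> set (gs @ hs) \<Longrightarrow>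
    gate_mat n M mA UA R g \<in> carrier_mat (full_dim n M mA) (full_dim n M mA)"
  shows "circuit_mat n M mA UA R (gs @ hs) = circuit_mat n M mA UA R hs * circuit_mat n M mA UA R gs"
  using assms
proof (induction hs rule: rev_induct)
  case Nil
  have "circuit_mat n M mA UA R gs \<in> carrier_mat (full_dim n M mA) (full_dim n M mA)"
    using Nil by (intro circuit_mat_carrier) auto
  then show ?case
    by (simp add: circuit_mat_Nil)
next
  case (snoc h hs)
  let ?N = "full_dim n M mA" and ?C = "circuit_mat n M mA UA R"
  have h: "gate_mat n M mA UA R h \<in> carrier_mat ?N ?N"
    and hs: "?C hs \<in> carrier_mat ?N ?N" and gs: "?C gs \<in> carrier_mat ?N ?N"
    using snoc.prems by (auto intro!: circuit_mat_carrier)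
  have "?C (gs @ hs @ [h]) = gate_mat n M mA UA R h * (?C hs * ?C gs)"
    using snoc by (simp add: circuit_mat_snoc flip: append_assoc)
  also have "\<dots> = ?C (hs @ [h]) * ?C gs"
    unfolding circuit_mat_snoc by (rule assoc_mult_mat[OF h hs gs, symmetric])
  finally show ?case .
qed

lemma circuit_mat_unitary:
  assumes "\<And>g. g \<in> set gs \<Longrightarrow> gate_mat n M mA UA R g \<in> carrier_mat (full_dim n M mA) (full_dim n M mA)
    \<and> is_unitary (gate_mat n M mA UA R g)"
  shows "is_unitary (circuit_mat n M mA UA R gs)"
  using assms
proof (induction gs rule: rev_induct)
  case (snoc g gs)
  let ?N = "full_dim n M mA"
  have g: "gate_mat n M mA UA R g \<in> carrier_mat ?N ?N" "is_unitary (gate_mat n M mA UA R g)"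
    using snoc.prems by auto
  have gs: "circuit_mat n M mA UA R gs \<in> carrier_mat ?N ?N" "is_unitary (circuit_mat n M mA UA R gs)"
    using snoc by (auto intro!: circuit_mat_carrier)
  show ?case
    unfolding circuit_mat_snoc using g gs
    by (intro unitary_mult[where n = ?N]) (simp_all add: carrier_matD(1)[OF g(1)] carrier_matD(1)[OF gs(1)])
qed (simp add: circuit_mat_Nil unitary_one)

text \<open>Errors of unitary gates add up: \<open>G C - G' C' = G (C - C') + (G - G') C'\<close>.\<close>
lemma circuit_mat_error_le:
  assumes gates: "\<And>g. g \<in> set gs \<Longrightarrow>
    gate_mat n M mA UA R g \<in> carrier_mat (full_dim n M mA) (full_dim n M mA) \<and>
    gate_mat n M mA UA R' g \<in> carrier_mat (full_dim n M mA) (full_dim n M mA) \<and>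
    is_unitary (gate_mat n M mA UA R g) \<and> is_unitary (gate_mat n M mA UA R' g) \<and>
    opnorm (gate_mat n M mA UA R g - gate_mat n M mA UA R' g) \<le> (if is_RZ g then \<epsilon> else 0)"
  shows "opnorm (circuit_mat n M mA UA R gs - circuit_mat n M mA UA R' gs) \<le>
    \<epsilon> * length (filter is_RZ gs)"
  using assms
proof (induction gs rule: rev_induct)
  case Nil
  then show ?case
    by (simp add: circuit_mat_Nil opnorm_minus_self[of _ "full_dim n M mA" "full_dim n M mA"])
next
  case (snoc g gs)
  let ?N = "full_dim n M mA"
  let ?G = "gate_mat n M mA UA R g" and ?G' = "gate_mat n M mA UA R' g"
  let ?C = "circuit_mat n M mA UA R gs" and ?C' = "circuit_mat n M mA UA R' gs"
  have G: "?G \<in> carrier_mat ?N ?N" "?G' \<in> carrier_mat ?N ?N" "is_unitary ?G"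
    and G_err: "opnorm (?G - ?G') \<le> (if is_RZ g then \<epsilon> else 0)"
    using snoc.prems by auto
  have C: "?C \<in> carrier_mat ?N ?N" "?C' \<in> carrier_mat ?N ?N" "is_unitary ?C'"
    using snoc.prems by (auto intro!: circuit_mat_carrier circuit_mat_unitary)
  have C_err: "opnorm (?C - ?C') \<le> \<epsilon> * length (filter is_RZ gs)"
    using snoc by auto
  have "opnorm (?G * ?C - ?G' * ?C') \<le> opnorm (?G * (?C - ?C')) + opnorm ((?G - ?G') * ?C')"
    unfolding mult_minus_mult_eq[OF G(1,2) C(1,2)] using G C by (intro opnorm_add_le) auto
  also have "\<dots> \<le> opnorm ?G * opnorm (?C - ?C') + opnorm (?G - ?G') * opnorm ?C'"
    using G C by (intro add_mono opnorm_mult_le) auto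
  also have "\<dots> \<le> opnorm (?C - ?C') + opnorm (?G - ?G')"
    using unitary_opnorm_le[OF G(3)] unitary_opnorm_le[OF C(3)] opnorm_nonneg[of "?C - ?C'"]
      opnorm_nonneg[of "?G - ?G'"] opnorm_nonneg[of ?G]
    by (intro add_mono mult_left_le_one_le mult_left_le) simp_all
  finally have "opnorm (?G * ?C - ?G' * ?C') \<le> opnorm (?C - ?C') + opnorm (?G - ?G')" .
  then show ?case
    unfolding circuit_mat_snoc using C_err G_err by (cases "is_RZ g") (simp_all add: algebra_simps)
qed

fun gate_phase :: "gate \<Rightarrow> nat \<Rightarrow> nat \<Rightarrow> complex" where
  "gate_phase (G_RZ c t \<phi>) a j = rz_phase c t \<phi> a j"
| "gate_phase _ a j = 1"

lemma rz_circuit_diagonal: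
  assumes "\<And>g. g \<in> set gs \<Longrightarrow> is_RZ g \<and> valid_gate g"
  shows "circuit_mat n M mA UA (rz_ideal n M mA) gs \<in> carrier_mat (full_dim n M mA) (full_dim n M mA) \<and>
    (\<forall>q<full_dim n M mA. \<forall>q'<full_dim n M mA. circuit_mat n M mA UA (rz_ideal n M mA) gs $$ (q, q') =
      (if q = q' then (\<Prod>g\<leftarrow>gs. gate_phase g (idx_a n M mA q) (idx_j n M mA q)) else 0))"
  using assms
proof (induction gs rule: rev_induct)
  case (snoc g gs)
  let ?N = "full_dim n M mA" and ?C = "circuit_mat n M mA UA (rz_ideal n M mA) gs"
  have "is_RZ g \<and> valid_gate g"
    using snoc.prems by simp
  then obtain c t \<phi> where g: "g = G_RZ c t \<phi>" and t: "t < 2"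
    by (cases g) auto
  have C: "?C \<in> carrier_mat ?N ?N"
    and C_index: "\<And>q q'. q < ?N \<Longrightarrow> q' < ?N \<Longrightarrow> ?C $$ (q, q') =
      (if q = q' then (\<Prod>g\<leftarrow>gs. gate_phase g (idx_a n M mA q) (idx_j n M mA q)) else 0)"
    using snoc by auto
  have "(rz_ideal n M mA c t \<phi> * ?C) $$ (q, q') =
      (if q = q' then (\<Prod>g\<leftarrow>gs @ [g]. gate_phase g (idx_a n M mA q) (idx_j n M mA q)) else 0)"
    if "q < ?N" "q' < ?N" for q q'
    using that by (simp add: diagonal_mult_index[OF rz_ideal_carrier rz_ideal_index[OF t] C] C_index g mult.commute)
  then show ?case
    using C by (simp add: g circuit_mat_snoc mult_carrier_mat[OF rz_ideal_carrier C])
qed (simp add: circuit_mat_Nil)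
section \<open>The construction\<close>

definition index_ctrl :: "nat \<Rightarrow> ctrl" where
  "index_ctrl j = Ctrl None None (Some j)"

definition rz_layer :: "nat \<Rightarrow> (nat \<Rightarrow> real) \<Rightarrow> (nat \<Rightarrow> real) \<Rightarrow> gate list" where
  "rz_layer M ph0 ph1 = map (\<lambda>j. G_RZ (index_ctrl j) 0 (ph0 j)) [0..<M] @
     map (\<lambda>j. G_RZ (index_ctrl j) 1 (ph1 j)) [0..<M]"

definition lcu_circuit :: "nat \<Rightarrow> (nat \<Rightarrow> real) \<Rightarrow> (nat \<Rightarrow> real) \<Rightarrow> gate list" where
  "lcu_circuit M ph0 ph1 = [G_Had 1, G_Had 0, G_UA anc0_off, G_UAdag anc0_on] @
     rz_layer M ph0 ph1 @ [G_Had 0, G_Had 1]"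

definition arg_phase :: "(nat \<Rightarrow> real) \<Rightarrow> nat \<Rightarrow> real" where
  "arg_phase k j = 2 * Arg (Complex (k j) 1)"

definition amp_phase :: "(nat \<Rightarrow> real) \<Rightarrow> real \<Rightarrow> nat \<Rightarrow> real" where
  "amp_phase k km j = 2 * arccos (sqrt (1 + (k j)\<^sup>2) / sqrt (1 + km\<^sup>2))"

lemma ctrl_sat_index_ctrl [simp]: "ctrl_sat (index_ctrl j0) a j \<longleftrightarrow> j = j0"
  by (simp add: index_ctrl_def)

lemma rz_layer_RZ: "g \<in> set (rz_layer M ph0 ph1) \<Longrightarrow> is_RZ g \<and> valid_gate g"
  by (auto simp: rz_layer_def)

lemma lcu_circuit_counts:
  "list_all valid_gate (lcu_circuit M ph0 ph1)"
  "length (filter is_UA_call (lcu_circuit M ph0 ph1)) = 1"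
  "length (filter is_UAdag_call (lcu_circuit M ph0 ph1)) = 1"
  "length (filter is_RZ (lcu_circuit M ph0 ph1)) = 2 * M"
  using rz_layer_RZ[of _ M ph0 ph1]
  by (auto simp: lcu_circuit_def list_all_iff) (simp_all add: rz_layer_def o_def)

lemma prod_list_upt_delta:
  assumes "j < M"
  shows "(\<Prod>j0\<leftarrow>[0..<M]. if j = j0 then f j0 else 1) = (f j :: complex)"
proof -
  have "(\<Prod>j0\<leftarrow>[0..<M]. if j = j0 then f j0 else 1) = (\<Prod>j0\<in>set [0..<M]. if j = j0 then f j0 else 1)"
    by (rule prod.distinct_set_conv_list[symmetric]) simp
  also have "\<dots> = f j"
    using assms by (subst prod.delta') simp_all
  finally show ?thesis .
qed

lemma rz_layer_phase:
  "j < M \<Longrightarrow> (\<Prod>g\<leftarrow>rz_layer M ph0 ph1. gate_phase g a j) =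
    rz_diag (ph0 j) (abit 0 a) * rz_diag (ph1 j) (abit 1 a)"
  unfolding rz_layer_def map_append prod_list.append map_map o_def gate_phase.simps rz_phase_def
  by (simp add: prod_list_upt_delta)

lemma lcu_circuit_mat:
  "circuit_mat n M mA UA (rz_ideal n M mA) (lcu_circuit M ph0 ph1) =
    on_anc n M mA 1 hadamard * (on_anc n M mA 0 hadamard *
      (circuit_mat n M mA UA (rz_ideal n M mA) (rz_layer M ph0 ph1) *
        (((ctrl_call n M mA anc0_on (dag UA) * ctrl_call n M mA anc0_off UA) *
          on_anc n M mA 0 hadamard) * on_anc n M mA 1 hadamard)))"
proof -
  let ?N = "full_dim n M mA" and ?C = "circuit_mat n M mA UA (rz_ideal n M mA)"
  have D: "?C (rz_layer M ph0 ph1) \<in> carrier_mat ?N ?N"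
    by (rule circuit_mat_carrier) simp
  have append: "?C (gs @ hs) = ?C hs * ?C gs" for gs hs
    by (rule circuit_mat_append) simp
  have "?C [G_Had 0, G_Had 1] = on_anc n M mA 1 hadamard * on_anc n M mA 0 hadamard"
    "?C [G_Had 1, G_Had 0, G_UA anc0_off, G_UAdag anc0_on] = ctrl_call n M mA anc0_on (dag UA) *
      (ctrl_call n M mA anc0_off UA * (on_anc n M mA 0 hadamard * on_anc n M mA 1 hadamard))"
    by (simp_all add: circuit_mat_def)
  moreover have "?C (lcu_circuit M ph0 ph1) = (?C [G_Had 0, G_Had 1] * ?C (rz_layer M ph0 ph1)) *
      ?C [G_Had 1, G_Had 0, G_UA anc0_off, G_UAdag anc0_on]"
    unfolding lcu_circuit_def append ..
  ultimately show ?thesis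
    using D by (simp add: assoc_mult_mat[of _ ?N ?N _ ?N _ ?N] mult_carrier_mat[of _ ?N ?N _ ?N])
qed

lemma anc_block_rz_layer_mult:
  assumes Z: "Z \<in> carrier_mat (full_dim n M mA) (full_dim n M mA)"
    and a: "a < 4" "a' < 4" and r: "r < M * 2^n" "c < M * 2^n"
  shows "anc_block n M mA (circuit_mat n M mA UA (rz_ideal n M mA) (rz_layer M ph0 ph1) * Z) r c a a' =
    rz_diag (ph0 (r div 2^n)) (abit 0 a) * rz_diag (ph1 (r div 2^n)) (abit 1 a) * anc_block n M mA Z r c a a'"
proof -
  let ?N = "full_dim n M mA" and ?K = "lower_dim n M mA"
  let ?D = "circuit_mat n M mA UA (rz_ideal n M mA) (rz_layer M ph0 ph1)"
  have D: "?D \<in> carrier_mat ?N ?N" "\<And>q q'. q < ?N \<Longrightarrow> q' < ?N \<Longrightarrow> ?D $$ (q, q') =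
      (if q = q' then (\<Prod>g\<leftarrow>rz_layer M ph0 ph1. gate_phase g (idx_a n M mA q) (idx_j n M mA q)) else 0)"
    using rz_circuit_diagonal[OF rz_layer_RZ] by auto
  have "anc_block n M mA (?D * Z) r c a a' =
      (\<Prod>g\<leftarrow>rz_layer M ph0 ph1. gate_phase g (idx_a n M mA (a * ?K + r)) (idx_j n M mA (a * ?K + r))) *
      anc_block n M mA Z r c a a'"
    using a r by (intro anc_block_diagonal_mult[OF D Z]) (simp_all add: top_index_less_lower_dim)
  then show ?thesis
    using idx_anc_index[OF a(1) r(1)] r by (simp add: rz_layer_phase less_mult_imp_div_less)
qed

lemma lcu_ideal_top_index:
  assumes r: "r < M * 2^n" "c < M * 2^n"
  shows "circuit_mat n M mA UA (rz_ideal n M mA) (lcu_circuit M ph0 ph1) $$ (r, c) =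
    (if r div 2^n = c div 2^n then 1/4 * (\<Sum>a<4. rz_diag (ph0 (r div 2^n)) (abit 0 a) *
        rz_diag (ph1 (r div 2^n)) (abit 1 a) * (if abit 0 a then dag UA else UA) $$ (r mod 2^n, c mod 2^n))
     else 0)"
proof -
  let ?N = "full_dim n M mA" and ?j = "r div 2^n"
  let ?H0 = "on_anc n M mA 0 hadamard" and ?H1 = "on_anc n M mA 1 hadamard"
  let ?CC = "ctrl_call n M mA anc0_on (dag UA) * ctrl_call n M mA anc0_off UA"
  let ?D = "circuit_mat n M mA UA (rz_ideal n M mA) (rz_layer M ph0 ph1)"
  let ?ph = "\<lambda>a. rz_diag (ph0 ?j) (abit 0 a) * rz_diag (ph1 ?j) (abit 1 a)"
  let ?W = "\<lambda>a. (if abit 0 a then dag UA else UA) $$ (r mod 2^n, c mod 2^n)"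
  have rK: "r < lower_dim n M mA" "c < lower_dim n M mA"
    using r by (simp_all add: top_index_less_lower_dim)
  have CC: "?CC \<in> carrier_mat ?N ?N"
    by (rule mult_carrier_mat[OF ctrl_call_carrier ctrl_call_carrier])
  then have CC: "?CC \<in> carrier_mat ?N ?N" "(?CC * ?H0) * ?H1 \<in> carrier_mat ?N ?N"
    by (auto intro!: mult_carrier_mat[OF mult_carrier_mat[OF _ on_anc_carrier] on_anc_carrier])
  have D: "?D \<in> carrier_mat ?N ?N"
    by (rule circuit_mat_carrier) simp
  have inner: "anc_block n M mA (?D * ((?CC * ?H0) * ?H1)) r c a 0 = ?ph a * (if ?j = c div 2^n then ?W a / 2 else 0)"
    if a: "a < 4" for a
  proof -
    have "anc_block n M mA (?D * ((?CC * ?H0) * ?H1)) r c a 0 =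
        ?ph a * (1/2 * (\<Sum>a'<4. anc_block n M mA ?CC r c a a'))"
      using anc_block_rz_layer_mult[OF CC(2) a _ r, of 0] anc_block_mult_hadamards[OF CC(1) a rK] by simp
    also have "\<dots> = ?ph a * (if ?j = c div 2^n then ?W a / 2 else 0)"
      using a by (simp add: anc_block_ctrl_call_pair[OF _ _ r])
    finally show ?thesis .
  qed
  have "circuit_mat n M mA UA (rz_ideal n M mA) (lcu_circuit M ph0 ph1) $$ (r, c) =
      anc_block n M mA (?H1 * (?H0 * (?D * ((?CC * ?H0) * ?H1)))) r c 0 0"
    unfolding lcu_circuit_mat anc_block_def by simp
  also have "\<dots> = 1/2 * (\<Sum>a<4. anc_block n M mA (?D * ((?CC * ?H0) * ?H1)) r c a 0)"
    using rK by (intro anc_block_hadamards_mult mult_carrier_mat[OF D CC(2)]) simp_all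
  also have "\<dots> = 1/2 * (\<Sum>a<4. ?ph a * (if ?j = c div 2^n then ?W a / 2 else 0))"
    using inner by simp
  finally show ?thesis
    by (simp add: sum_distrib_left ac_simps)
qed

lemma abit_values:
  "abit 0 0 = False" "abit 0 1 = True" "abit 0 2 = False" "abit 0 3 = True"
  "abit 1 0 = False" "abit 1 1 = False" "abit 1 2 = True" "abit 1 3 = True"
  by (simp_all add: abit_def)

lemma sum_rz_diag_anc:
  "(\<Sum>a<4. rz_diag p0 (abit 0 a) * rz_diag p1 (abit 1 a) * (if abit 0 a then P else Q) $$ ij) =
    (rz_diag p1 False + rz_diag p1 True) * (rz_diag p0 False * Q $$ ij + rz_diag p0 True * P $$ ij)"
  unfolding sum_4 abit_values by (simp add: algebra_simps)

lemma rz_diag_arccos_sum: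
  "-1 \<le> x \<Longrightarrow> x \<le> 1 \<Longrightarrow> rz_diag (2 * arccos x) False + rz_diag (2 * arccos x) True = 2 * complex_of_real x"
  by (simp add: rz_diag_def complex_eq_iff cos_arccos)

lemma of_real_cmod_mult_cis_Arg: "complex_of_real (cmod z) * cis (Arg z) = z"
  using rcis_cmod_Arg[of z] by (simp add: rcis_def)

lemma of_real_cmod_mult_cis_minus_Arg: "complex_of_real (cmod z) * cis (- Arg z) = cnj z"
  using arg_cong[OF of_real_cmod_mult_cis_Arg[of z], of cnj] by (simp add: cis_cnj)

lemma cmod_Complex_1: "cmod (Complex a 1) = sqrt (1 + a\<^sup>2)"
  by (simp add: cmod_def add.commute)

lemma sqrt_one_plus_square_le: "\<bar>a\<bar> \<le> km \<Longrightarrow> sqrt (1 + a\<^sup>2) \<le> sqrt (1 + km\<^sup>2)"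
  by (simp add: abs_le_square_iff[symmetric] abs_le_iff)

text \<open>The rotation angles turn the uniform average over the ancilla values into the
  combination \<open>(cnj z Q + z P) / 2\<close> with \<open>z = k + \<i>\<close>, up to the normalisation
  \<open>sqrt (1 + km\<^sup>2)\<close>.\<close>
lemma lcu_coefficients:
  assumes k: "\<bar>k j\<bar> \<le> km"
  shows "complex_of_real (sqrt (1 + km\<^sup>2)) * (1/4 * (\<Sum>a<4. rz_diag (arg_phase k j) (abit 0 a) *
      rz_diag (amp_phase k km j) (abit 1 a) * (if abit 0 a then P else Q) $$ ij)) =
    cnj (Complex (k j) 1) / 2 * Q $$ ij + Complex (k j) 1 / 2 * P $$ ij"
proof -
  let ?z = "Complex (k j) 1" and ?sK = "sqrt (1 + km\<^sup>2)"
  have sK: "?sK > 0"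
    by (simp add: add_pos_nonneg)
  have ratio: "-1 \<le> cmod ?z / ?sK" "cmod ?z / ?sK \<le> 1"
    using sK sqrt_one_plus_square_le[OF k] unfolding cmod_Complex_1
    by (simp_all add: order_trans[OF _ divide_nonneg_pos[of _ ?sK]])
  have "(\<Sum>a<4. rz_diag (arg_phase k j) (abit 0 a) * rz_diag (amp_phase k km j) (abit 1 a) *
      (if abit 0 a then P else Q) $$ ij) =
      2 * complex_of_real (cmod ?z / ?sK) * (cis (- Arg ?z) * Q $$ ij + cis (Arg ?z) * P $$ ij)"
    using rz_diag_arccos_sum[OF ratio]
    unfolding sum_rz_diag_anc by (simp add: amp_phase_def arg_phase_def cmod_Complex_1 rz_diag_def)
  also have "\<dots> = 2 / complex_of_real ?sK *
      ((complex_of_real (cmod ?z) * cis (- Arg ?z)) * Q $$ ij + (complex_of_real (cmod ?z) * cis (Arg ?z)) * P $$ ij)"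
    by (simp add: field_simps)
  also have "\<dots> = 2 / complex_of_real ?sK * (cnj ?z * Q $$ ij + ?z * P $$ ij)"
    unfolding of_real_cmod_mult_cis_Arg of_real_cmod_mult_cis_minus_Arg ..
  finally show ?thesis
    using sK by (simp add: field_simps)
qed

lemma S_op_dims [simp]: "dim_row (S_op n M k A) = M * 2^n" "dim_col (S_op n M k A) = M * 2^n"
  by (simp_all add: S_op_def)

lemma S_op_index:
  assumes A: "A \<in> carrier_mat (2^n) (2^n)" and r: "r < M * 2^n" "c < M * 2^n"
  shows "S_op n M k A $$ (r, c) = (if r div 2^n = c div 2^n then
      cnj (Complex (k (r div 2^n)) 1) / 2 * A $$ (r mod 2^n, c mod 2^n) +
      Complex (k (r div 2^n)) 1 / 2 * cnj (A $$ (c mod 2^n, r mod 2^n)) else 0)"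
proof -
  have "Complex x 1 = complex_of_real x + \<i>" "cnj (Complex x 1) = complex_of_real x - \<i>" for x
    by (simp_all add: complex_eq_iff)
  moreover have "1 / (2 * \<i>) = - \<i> / 2"
    by (simp add: field_simps)
  ultimately show ?thesis
    using A r by (simp add: S_op_def herm_part_def antiherm_part_def field_simps)
qed

lemma lcu_ideal_top_block:
  assumes UA: "UA \<in> carrier_mat (2^mA * 2^n) (2^mA * 2^n)"
    and r: "r < M * 2^n" "c < M * 2^n" and k: "\<bar>k (r div 2^n)\<bar> \<le> km"
  shows "complex_of_real (sqrt (1 + km\<^sup>2)) *
      circuit_mat n M mA UA (rz_ideal n M mA) (lcu_circuit M (arg_phase k) (amp_phase k km)) $$ (r, c) =
    (if r div 2^n = c div 2^n then
      cnj (Complex (k (r div 2^n)) 1) / 2 * UA $$ (r mod 2^n, c mod 2^n) +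
      Complex (k (r div 2^n)) 1 / 2 * cnj (UA $$ (c mod 2^n, r mod 2^n)) else 0)"
proof -
  have "x mod 2^n < 2^mA * 2^n" for x :: nat
    using less_le_trans[of "x mod 2^n" "2^n" "2^mA * 2^n"] by simp
  then have dag_UA: "dag UA $$ (r mod 2^n, c mod 2^n) = cnj (UA $$ (c mod 2^n, r mod 2^n))"
    using UA by simp
  show ?thesis
  proof (cases "r div 2^n = c div 2^n")
    case True
    then show ?thesis
      using dag_UA lcu_coefficients[where k = k and j = "r div 2^n" and km = km and P = "dag UA" and Q = UA
        and ij = "(r mod 2^n, c mod 2^n)", OF k] r
      by (simp add: lcu_ideal_top_index)
  qed (use r in \<open>simp add: lcu_ideal_top_index\<close>)
qed
lemma opnorm_cnj_smult_add_dag_le: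
  assumes E: "E \<in> carrier_mat D D"
  shows "opnorm (cnj z / 2 \<cdot>\<^sub>m E + z / 2 \<cdot>\<^sub>m dag E) \<le> cmod z * opnorm E"
proof -
  have "opnorm (cnj z / 2 \<cdot>\<^sub>m E + z / 2 \<cdot>\<^sub>m dag E) \<le> opnorm (cnj z / 2 \<cdot>\<^sub>m E) + opnorm (z / 2 \<cdot>\<^sub>m dag E)"
    using E dag_carrier_square[OF E] by (intro opnorm_add_le[where nr = D and nc = D]) auto
  also have "\<dots> \<le> cmod (cnj z / 2) * opnorm E + cmod (z / 2) * opnorm E"
    using opnorm_smult_le[of "cnj z / 2" E] opnorm_smult_le[of "z / 2" "dag E"] opnorm_dag_le[of E]
    by (smt (verit) mult_left_mono norm_ge_zero)
  also have "\<dots> = cmod z * opnorm E"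
    by (simp add: norm_divide field_simps)
  finally show ?thesis .
qed

lemma lcu_ideal_error:
  assumes UA: "UA \<in> carrier_mat (2^mA * 2^n) (2^mA * 2^n)" and A: "A \<in> carrier_mat (2^n) (2^n)"
    and UA_A: "opnorm (complex_of_real \<alpha> \<cdot>\<^sub>m top_block (2^n) UA - A) \<le> \<epsilon>A"
    and k: "\<And>j. j < M \<Longrightarrow> \<bar>k j\<bar> \<le> km"
  shows "opnorm (complex_of_real (sqrt (1 + km\<^sup>2) * \<alpha>) \<cdot>\<^sub>m top_block (M * 2^n)
      (circuit_mat n M mA UA (rz_ideal n M mA) (lcu_circuit M (arg_phase k) (amp_phase k km))) - S_op n M k A)
    \<le> sqrt (1 + km\<^sup>2) * \<epsilon>A"
proof -
  let ?sK = "sqrt (1 + km\<^sup>2)" and ?z = "\<lambda>j. Complex (k j) 1"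
  let ?U = "circuit_mat n M mA UA (rz_ideal n M mA) (lcu_circuit M (arg_phase k) (amp_phase k km))"
  let ?E = "complex_of_real \<alpha> \<cdot>\<^sub>m top_block (2^n) UA - A"
  let ?Y = "\<lambda>j. cnj (?z j) / 2 \<cdot>\<^sub>m ?E + ?z j / 2 \<cdot>\<^sub>m dag ?E"
  have E: "?E \<in> carrier_mat (2^n) (2^n)"
    using A by auto
  have "0 \<le> \<epsilon>A"
    using UA_A opnorm_nonneg[of ?E] by linarith
  show ?thesis
  proof (rule opnorm_block_diag_le[where Y = ?Y])
    show "?Y j \<in> carrier_mat (2^n) (2^n) \<and> opnorm (?Y j) \<le> ?sK * \<epsilon>A" if j: "j < M" for j
    proof
      show "?Y j \<in> carrier_mat (2^n) (2^n)"
        using E dag_carrier_square[OF E] by auto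
      have "opnorm (?Y j) \<le> cmod (?z j) * \<epsilon>A"
        using opnorm_cnj_smult_add_dag_le[OF E, of "?z j"] UA_A
        by (meson mult_left_mono norm_ge_zero order_trans)
      also have "\<dots> \<le> ?sK * \<epsilon>A"
        using sqrt_one_plus_square_le[OF k[OF j]] \<open>0 \<le> \<epsilon>A\<close>
        by (simp add: cmod_Complex_1 mult_right_mono)
      finally show "opnorm (?Y j) \<le> ?sK * \<epsilon>A" .
    qed
    fix r c assume r: "r < M * 2^n" "c < M * 2^n"
    let ?s = "r mod 2^n" and ?s' = "c mod 2^n" and ?j = "r div 2^n"
    have s: "?s < 2^n" "?s' < 2^n"
      by simp_all
    have "(complex_of_real (?sK * \<alpha>) \<cdot>\<^sub>m top_block (M * 2^n) ?U - S_op n M k A) $$ (r, c) =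
        complex_of_real \<alpha> * (complex_of_real ?sK * ?U $$ (r, c)) - S_op n M k A $$ (r, c)"
      using r by (simp add: top_block_def)
    also have "\<dots> = (if ?j = c div 2^n then ?Y ?j $$ (?s, ?s') else 0)"
      using lcu_ideal_top_block[where k = k and km = km, OF UA r k[OF less_mult_imp_div_less[OF r(1)]]]
        S_op_index[OF A r] s A
      by (simp add: top_block_def algebra_simps)
    finally show "(complex_of_real (?sK * \<alpha>) \<cdot>\<^sub>m top_block (M * 2^n) ?U - S_op n M k A) $$ (r, c) =
        (if ?j = c div 2^n then ?Y ?j $$ (?s, ?s') else 0)" .
  qed (use \<open>0 \<le> \<epsilon>A\<close> in \<open>auto simp: top_block_def\<close>)
qed

lemma lcu_circuit_gate_cases:
  assumes g: "g \<in> set (lcu_circuit M p q)"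
  obtains (had) t where "g = G_Had t" "t < 2" | (ua) "g = G_UA anc0_off" | (uadag) "g = G_UAdag anc0_on"
    | (rz) c t \<phi> where "g = G_RZ c t \<phi>" "t < 2"
proof -
  have "g \<in> {G_Had 0, G_Had 1, G_UA anc0_off, G_UAdag anc0_on} \<or> g \<in> set (rz_layer M p q)"
    using g by (auto simp: lcu_circuit_def)
  then show ?thesis
  proof
    assume "g \<in> {G_Had 0, G_Had 1, G_UA anc0_off, G_UAdag anc0_on}"
    then show ?thesis
      using that(1)[of 0] that(1)[of 1] that(2,3) by auto
  next
    assume "g \<in> set (rz_layer M p q)"
    then have "is_RZ g \<and> valid_gate g"
      by (rule rz_layer_RZ)
    then show ?thesis
      using that(4) by (cases g) auto
  qed
qed

lemma lcu_circuit_gates: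
  assumes UA: "is_unitary UA" "UA \<in> carrier_mat (2^mA * 2^n) (2^mA * 2^n)"
    and R: "\<And>c t \<phi>. t < 2 \<Longrightarrow>
      R c t \<phi> \<in> carrier_mat (full_dim n M mA) (full_dim n M mA) \<and> is_unitary (R c t \<phi>) \<and>
      opnorm (R c t \<phi> - rz_ideal n M mA c t \<phi>) \<le> \<epsilon>R"
    and g: "g \<in> set (lcu_circuit M p q)"
  shows "gate_mat n M mA UA R g \<in> carrier_mat (full_dim n M mA) (full_dim n M mA) \<and>
    gate_mat n M mA UA (rz_ideal n M mA) g \<in> carrier_mat (full_dim n M mA) (full_dim n M mA) \<and>
    is_unitary (gate_mat n M mA UA R g) \<and> is_unitary (gate_mat n M mA UA (rz_ideal n M mA) g) \<and>
    opnorm (gate_mat n M mA UA R g - gate_mat n M mA UA (rz_ideal n M mA) g) \<le> (if is_RZ g then \<epsilon>R else 0)"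
  using g
proof (cases rule: lcu_circuit_gate_cases)
  case had
  then show ?thesis
    by (simp add: on_anc_hadamard_unitary opnorm_minus_self[OF on_anc_carrier])
next
  case ua
  then show ?thesis
    using UA by (simp add: ctrl_call_unitary opnorm_minus_self[OF ctrl_call_carrier])
next
  case uadag
  then show ?thesis
    using UA by (simp add: ctrl_call_unitary unitary_dag dag_carrier_square opnorm_minus_self[OF ctrl_call_carrier])
next
  case (rz c t \<phi>)
  then show ?thesis
    using R[of t c \<phi>] by (simp add: rz_ideal_unitary)
qed

lemma lcu_circuit_approx:
  assumes UA: "is_unitary UA" "UA \<in> carrier_mat (2^mA * 2^n) (2^mA * 2^n)"
    and R: "\<And>c t \<phi>. t < 2 \<Longrightarrow>
      R c t \<phi> \<in> carrier_mat (full_dim n M mA) (full_dim n M mA) \<and> is_unitary (R c t \<phi>) \<and>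
      opnorm (R c t \<phi> - rz_ideal n M mA c t \<phi>) \<le> \<epsilon>R"
  shows "circuit_mat n M mA UA R (lcu_circuit M p q) \<in> carrier_mat (full_dim n M mA) (full_dim n M mA)"
    "is_unitary (circuit_mat n M mA UA R (lcu_circuit M p q))"
    "circuit_mat n M mA UA (rz_ideal n M mA) (lcu_circuit M p q) \<in> carrier_mat (full_dim n M mA) (full_dim n M mA)"
    "opnorm (circuit_mat n M mA UA R (lcu_circuit M p q) - circuit_mat n M mA UA (rz_ideal n M mA) (lcu_circuit M p q))
      \<le> \<epsilon>R * (2 * M)"
proof -
  note gates = lcu_circuit_gates[OF UA R]
  show "circuit_mat n M mA UA R (lcu_circuit M p q) \<in> carrier_mat (full_dim n M mA) (full_dim n M mA)"
    "is_unitary (circuit_mat n M mA UA R (lcu_circuit M p q))"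
    using gates by (auto intro!: circuit_mat_carrier circuit_mat_unitary)
  show "circuit_mat n M mA UA (rz_ideal n M mA) (lcu_circuit M p q) \<in> carrier_mat (full_dim n M mA) (full_dim n M mA)"
    by (rule circuit_mat_carrier) simp
  have "opnorm (circuit_mat n M mA UA R (lcu_circuit M p q) - circuit_mat n M mA UA (rz_ideal n M mA) (lcu_circuit M p q))
      \<le> \<epsilon>R * length (filter is_RZ (lcu_circuit M p q))"
    by (rule circuit_mat_error_le) (rule gates)
  then show "opnorm (circuit_mat n M mA UA R (lcu_circuit M p q) - circuit_mat n M mA UA (rz_ideal n M mA) (lcu_circuit M p q))
      \<le> \<epsilon>R * (2 * M)"
    by (simp add: lcu_circuit_counts)
qed

lemma block_encodingD:
  assumes "block_encoding \<alpha> m \<epsilon> U B" "B \<in> carrier_mat d d"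
  shows "U \<in> carrier_mat (2^m * d) (2^m * d)" "is_unitary U"
    "opnorm (complex_of_real \<alpha> \<cdot>\<^sub>m top_block d U - B) \<le> \<epsilon>"
  using assms unfolding block_encoding_def Let_def by auto

lemma block_encoding_of_approx:
  assumes U: "U \<in> carrier_mat (2^m * d) (2^m * d)" "is_unitary U"
    and U': "U' \<in> carrier_mat (2^m * d) (2^m * d)" and B: "B \<in> carrier_mat d d" and \<alpha>: "\<alpha> \<ge> 0"
    and ideal: "opnorm (complex_of_real \<alpha> \<cdot>\<^sub>m top_block d U' - B) \<le> \<delta>"
    and close: "opnorm (U - U') \<le> \<eta>"
    and e: "\<delta> + \<alpha> * \<eta> \<le> e"
  shows "block_encoding \<alpha> m e U B"
proof -
  let ?a = "complex_of_real \<alpha>"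
  have split: "?a \<cdot>\<^sub>m top_block d U - B = ?a \<cdot>\<^sub>m top_block d (U - U') + (?a \<cdot>\<^sub>m top_block d U' - B)"
  proof (rule eq_matI)
    fix i j assume "i < dim_row (?a \<cdot>\<^sub>m top_block d (U - U') + (?a \<cdot>\<^sub>m top_block d U' - B))"
      "j < dim_col (?a \<cdot>\<^sub>m top_block d (U - U') + (?a \<cdot>\<^sub>m top_block d U' - B))"
    then have "i < d" "j < d" "i < 2^m * d" "j < 2^m * d"
      using B less_le_trans[of i d "2^m * d"] less_le_trans[of j d "2^m * d"] by (auto simp: top_block_def)
    then show "(?a \<cdot>\<^sub>m top_block d U - B) $$ (i, j) =
        (?a \<cdot>\<^sub>m top_block d (U - U') + (?a \<cdot>\<^sub>m top_block d U' - B)) $$ (i, j)"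
      using U U' B by (simp add: top_block_def algebra_simps)
  qed (use B in \<open>auto simp: top_block_def\<close>)
  have "opnorm (?a \<cdot>\<^sub>m top_block d (U - U')) \<le> \<alpha> * opnorm (top_block d (U - U'))"
    using opnorm_smult_le[of ?a "top_block d (U - U')"] \<alpha> by simp
  also have "\<dots> \<le> \<alpha> * opnorm (U - U')"
    using U U' \<alpha> by (intro mult_left_mono opnorm_top_block_le[where N = "2^m * d"]) auto
  finally have gates: "opnorm (?a \<cdot>\<^sub>m top_block d (U - U')) \<le> \<alpha> * \<eta>"
    using mult_left_mono[OF close \<alpha>] by linarith
  have "opnorm (?a \<cdot>\<^sub>m top_block d U - B) \<le>
      opnorm (?a \<cdot>\<^sub>m top_block d (U - U')) + opnorm (?a \<cdot>\<^sub>m top_block d U' - B)"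
    unfolding split by (rule opnorm_add_le[where nr = d and nc = d]) (use B in auto)
  then have "opnorm (?a \<cdot>\<^sub>m top_block d U - B) \<le> e"
    using gates ideal e by linarith
  then show ?thesis
    using U B unfolding block_encoding_def Let_def by (simp add: carrier_matD)
qed

theorem lemma4:
  fixes n M mA :: nat and A UA :: "complex mat" and k :: "nat \<Rightarrow> real"
    and \<alpha>A \<epsilon>A \<epsilon>R \<epsilon> :: real
    and R :: "ctrl \<Rightarrow> nat \<Rightarrow> real \<Rightarrow> complex mat"
  defines "kmax \<equiv> Max ((\<lambda>j. \<bar>k j\<bar>) ` {..<M})"
  assumes M_pos: "M \<ge> 1"
    and A_dim: "A \<in> carrier_mat (2^n) (2^n)"
    and \<alpha>A_nonneg: "\<alpha>A \<ge> 0"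
    and UA_be: "block_encoding \<alpha>A mA \<epsilon>A UA A"
    and R_acc: "\<And>c t \<phi>. t < 2 \<Longrightarrow>
        R c t \<phi> \<in> carrier_mat (full_dim n M mA) (full_dim n M mA) \<and> is_unitary (R c t \<phi>) \<and>
        opnorm (R c t \<phi> - rz_ideal n M mA c t \<phi>) \<le> \<epsilon>R"
    and budget: "\<epsilon>A * sqrt (1 + kmax\<^sup>2) + 2 * M * sqrt (1 + kmax\<^sup>2) * \<epsilon>R * \<alpha>A \<le> \<epsilon>"
  shows "\<exists>gs. list_all valid_gate gs \<and>
           length (filter is_UA_call gs) = 1 \<and> length (filter is_UAdag_call gs) = 1 \<and>
           length (filter is_RZ gs) = 2 * M \<and>
           block_encoding (sqrt (1 + kmax\<^sup>2) * \<alpha>A) (mA + 2) \<epsilon>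
             (circuit_mat n M mA UA R gs) (S_op n M k A)"
proof -
  let ?sK = "sqrt (1 + kmax\<^sup>2)" and ?gs = "lcu_circuit M (arg_phase k) (amp_phase k kmax)"
  let ?U = "circuit_mat n M mA UA R ?gs" and ?U' = "circuit_mat n M mA UA (rz_ideal n M mA) ?gs"
  note UA = block_encodingD[OF UA_be A_dim]
  have k: "\<bar>k j\<bar> \<le> kmax" if "j < M" for j
    unfolding kmax_def using that by (intro Max_ge) auto
  note U = lcu_circuit_approx[OF UA(2,1) R_acc, where p = "arg_phase k" and q = "amp_phase k kmax"]
  have ideal: "opnorm (complex_of_real (?sK * \<alpha>A) \<cdot>\<^sub>m top_block (M * 2^n) ?U' - S_op n M k A) \<le> ?sK * \<epsilon>A"
    by (rule lcu_ideal_error[OF UA(1) A_dim UA(3) k])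
  have dim: "full_dim n M mA = 2^(mA + 2) * (M * 2^n)"
    by (simp add: full_dim_def power_add ac_simps)
  have "?sK * \<epsilon>A + (?sK * \<alpha>A) * (\<epsilon>R * (2 * M)) \<le> \<epsilon>"
    using budget by (simp add: algebra_simps)
  then have "block_encoding (?sK * \<alpha>A) (mA + 2) \<epsilon> ?U (S_op n M k A)"
    using U ideal \<alpha>A_nonneg unfolding dim
    by (intro block_encoding_of_approx[where U' = ?U' and \<delta> = "?sK * \<epsilon>A" and \<eta> = "\<epsilon>R * (2 * M)"])
      (auto simp: S_op_def)
  then show ?thesis
    using lcu_circuit_counts by blast
qed

end
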